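(* Let $d\ge2$, $r\ge1$, $l_1,\dots,l_r\in\{1,\dots,d\}$ with $\sum_{j=1}^r l_j\le d$, and $l=d-\sum_{j=1}^r(l_j-1)$. Let $A\in\mathbf S(d;l_1,\dots,l_r)$ have a spectral decomposition $A=PDP^*$ with $P\in\mathbf O(d)$ and $D$ a real diagonal $d\times d$ matrix, and suppose $A$ has exactly $l$ distinct eigenvalues. Then for every $\varepsilon>0$ there is $\delta>0$ such that for every $B\in\mathbf S(d;l_1,\dots,l_r)$ with $\max_{1\le i,j\le d}|A_{i,j}-B_{i,j}|<\delta$, the matrix $B$ has exactly $l$ distinct eigenvalues and admits a spectral decomposition $B=QFQ^*$ with $Q\in\mathbf O(d)$, $F$ real diagonal, such that $\max_{1\le i\le d}|D_{i,i}-F_{i,i}|<\varepsilon$ and $\max_{1\le i,j\le d}|Q_{i,j}-P_{i,j}|<\varepsilon$.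
   Context: $\mathbf O(d)$ is the group of real orthogonal $d\times d$ matrices. For a real symmetric $d\times d$ matrix $x$ let $E_1(x)\le\cdots\le E_d(x)$ be its eigenvalues. $\mathbf S(d;l_1,\dots,l_r)$ is the set of real symmetric $d\times d$ matrices $x$ for which there exist pairwise disjoint $J_1,\dots,J_r\subseteq\{1,\dots,d\}$ with $|J_j|=l_j$ such that, for each $j$, the values $E_i(x)$, $i\in J_j$, are all equal. *)

theory Defs
  imports "HOL-Analysis.Analysis" "HOL-Computational_Algebra.Polynomial" "HOL-Library.Multiset"
begin

definition charpoly :: "real^'n^'n \<Rightarrow> real poly" where
  "charpoly x = det ((\<chi> i j. if i = j then [:0, 1:] else 0) - (\<chi> i j. [:x $ i $ j:]))"

definition eig_list :: "real^'n^'n \<Rightarrow> real list" where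
  "eig_list x = sorted_list_of_multiset (proots (charpoly x))"

text \<open>E i x for i in 1..d: the i-th smallest eigenvalue (1-based).\<close>
definition E :: "nat \<Rightarrow> real^'n^'n \<Rightarrow> real" where
  "E i x = eig_list x ! (i - 1)"

definition symmetric_matrix :: "real^'n^'n \<Rightarrow> bool" where
  "symmetric_matrix x \<longleftrightarrow> transpose x = x"

definition diagonal_mat :: "real^'n^'n \<Rightarrow> bool" where
  "diagonal_mat D \<longleftrightarrow> (\<forall>i j. i \<noteq> j \<longrightarrow> D $ i $ j = 0)"

text \<open>S(d; l_1,...,l_r), with d = CARD('n), the l_j given as ls 1, ..., ls r.\<close>
definition S_set :: "nat \<Rightarrow> (nat \<Rightarrow> nat) \<Rightarrow> (real^'n^'n) set" where
  "S_set r ls = {x. symmetric_matrix x \<and>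
     (\<exists>J :: nat \<Rightarrow> nat set.
        (\<forall>j\<in>{1..r}. J j \<subseteq> {1..CARD('n)} \<and> card (J j) = ls j \<and>
            (\<forall>i\<in>J j. \<forall>i'\<in>J j. E i x = E i' x)) \<and>
        (\<forall>j\<in>{1..r}. \<forall>j'\<in>{1..r}. j \<noteq> j' \<longrightarrow> J j \<inter> J j' = {}))}"

definition num_distinct_eigs :: "real^'n^'n \<Rightarrow> nat" where
  "num_distinct_eigs x = card (set (eig_list x))"

end

theory Submission
  imports Defs
begin

text \<open>Conjugating by \<open>P\<close> reduces the claim to symmetric matrices \<open>X = P\<^sup>T B P\<close> close to the
  diagonal matrix \<open>D\<close>. Every matrix in \<open>S(d; l\<^sub>1, \<dots>, l\<^sub>r)\<close> has at most \<open>l\<close> distinct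
  eigenvalues, whereas the eigenvalues of \<open>X\<close> lie in small clusters around those of \<open>D\<close>, at least
  one in each cluster. Hence \<open>X\<close> has exactly one eigenvalue per cluster, and its eigenvectors for
  one cluster are almost orthogonal to the coordinate vectors of the other clusters.

  Inside a multiple eigenspace the eigenvectors are not determined by \<open>X\<close>. They are chosen by
  perturbing \<open>X\<close> so that its eigenspaces stay invariant while the nearby diagonal matrix gets a
  simple spectrum. For a matrix near a diagonal matrix with simple spectrum, the orthogonal
  eigenvector matrix is close to a signed permutation matrix, and reordering and flipping the
  eigenvectors makes it close to the identity.\<close>

lemma orthogonal_matrix_columns:
  fixes C :: "real^'n^'n"
  assumes "orthogonal_matrix C"
  shows "(\<Sum>i\<in>UNIV. C$i$j * C$i$j') = (if j = j' then 1 else 0)"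
proof -
  have "(transpose C ** C)$j$j' = (mat 1 :: real^'n^'n)$j$j'"
    using assms unfolding orthogonal_matrix_def by simp
  then show ?thesis by (simp add: matrix_matrix_mult_def transpose_def mat_def)
qed

lemma orthogonal_matrix_rows:
  fixes C :: "real^'n^'n"
  assumes "orthogonal_matrix C"
  shows "(\<Sum>j\<in>UNIV. C$i$j * C$i'$j) = (if i = i' then 1 else 0)"
  using orthogonal_matrix_columns[of "transpose C" i i'] assms
  by (simp add: orthogonal_matrix_def transpose_def)

lemma orthogonal_matrix_entry_bound:
  fixes C :: "real^'n^'n"
  assumes "orthogonal_matrix C"
  shows "\<bar>C$i$j\<bar> \<le> 1"
proof -
  have "C$i$j * C$i$j \<le> (\<Sum>i'\<in>UNIV. C$i'$j * C$i'$j)"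
    by (rule member_le_sum) auto
  also have "\<dots> = 1" using orthogonal_matrix_columns[OF assms, of j j] by simp
  finally show ?thesis by (simp add: abs_square_le_1 power2_eq_square[symmetric])
qed

lemma orthogonal_matrix_column_large_entry:
  fixes C :: "real^'n^'n"
  assumes C: "orthogonal_matrix C"
  obtains i where "1 / real CARD('n) \<le> \<bar>C$i$j\<bar>"
proof (rule ccontr)
  assume "\<not> thesis"
  with that have small: "\<bar>C$i$j\<bar> < 1 / real CARD('n)" for i by (meson not_le)
  have "1 = (\<Sum>i\<in>UNIV. C$i$j * C$i$j)" using orthogonal_matrix_columns[OF C, of j j] by simp
  also have "\<dots> < (\<Sum>i\<in>(UNIV::'n set). 1 / real CARD('n) * (1 / real CARD('n)))"
  proof (rule sum_strict_mono)
    fix i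
    have "\<bar>C$i$j\<bar> * \<bar>C$i$j\<bar> < 1 / real CARD('n) * (1 / real CARD('n))"
      using small[of i] by (intro mult_strict_mono') auto
    then show "C$i$j * C$i$j < 1 / real CARD('n) * (1 / real CARD('n))" by simp
  qed auto
  also have "\<dots> \<le> 1" by simp
  finally show False by simp
qed

lemma orthogonal_matrix_row_large_entry:
  fixes C :: "real^'n^'n"
  assumes "orthogonal_matrix C"
  obtains j where "1 / real CARD('n) \<le> \<bar>C$i$j\<bar>"
  using orthogonal_matrix_column_large_entry[of "transpose C" i] assms
  by (auto simp: orthogonal_matrix_def transpose_def)

lemma orthogonal_matrix_mult_near_identity:
  fixes P C :: "real^'n^'n"
  assumes P: "orthogonal_matrix P" and C: "\<forall>k. \<bar>C$k$j - mat 1$k$j\<bar> < e"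
  shows "\<bar>(P ** C)$i$j - P$i$j\<bar> < real CARD('n) * e"
proof -
  have "(\<Sum>k\<in>UNIV. P$i$k * mat 1$k$j) = P$i$j"
    by (simp add: mat_def if_distrib cong: if_cong)
  then have "(P ** C)$i$j - P$i$j = (\<Sum>k\<in>UNIV. P$i$k * (C$k$j - mat 1$k$j))"
    by (simp add: matrix_matrix_mult_def right_diff_distrib sum_subtractf)
  also have "\<bar>\<dots>\<bar> \<le> (\<Sum>k\<in>UNIV. \<bar>P$i$k * (C$k$j - mat 1$k$j)\<bar>)" by (rule sum_abs)
  also have "\<dots> < (\<Sum>k\<in>(UNIV::'n set). e)"
  proof (rule sum_strict_mono)
    fix k
    have "\<bar>P$i$k\<bar> * \<bar>C$k$j - mat 1$k$j\<bar> \<le> 1 * \<bar>C$k$j - mat 1$k$j\<bar>"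
      using orthogonal_matrix_entry_bound[OF P] by (intro mult_right_mono) auto
    then show "\<bar>P$i$k * (C$k$j - mat 1$k$j)\<bar> < e" using C[rule_format, of k] by (simp add: abs_mult)
  qed auto
  finally show ?thesis by simp
qed

lemma diagonal_mat_mult_left:
  fixes F M :: "real^'n^'n"
  assumes "diagonal_mat F"
  shows "(F ** M)$i$j = F$i$i * M$i$j"
proof -
  have "(F ** M)$i$j = (\<Sum>k\<in>UNIV. F$i$k * M$k$j)" by (simp add: matrix_matrix_mult_def)
  also have "\<dots> = (\<Sum>k\<in>UNIV. if k = i then F$i$i * M$i$j else 0)"
    by (rule sum.cong) (use assms in \<open>auto simp: diagonal_mat_def\<close>)
  finally show ?thesis by simp
qed

lemma diagonal_mat_mult_right:
  fixes F M :: "real^'n^'n"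
  assumes "diagonal_mat F"
  shows "(M ** F)$i$j = M$i$j * F$j$j"
proof -
  have "(M ** F)$i$j = (\<Sum>k\<in>UNIV. M$i$k * F$k$j)" by (simp add: matrix_matrix_mult_def)
  also have "\<dots> = (\<Sum>k\<in>UNIV. if k = j then M$i$j * F$j$j else 0)"
    by (rule sum.cong) (use assms in \<open>auto simp: diagonal_mat_def\<close>)
  finally show ?thesis by simp
qed

lemma symmetric_matrix_iff: "symmetric_matrix X \<longleftrightarrow> (\<forall>i j. X$j$i = X$i$j)"
  by (simp add: symmetric_matrix_def vec_eq_iff transpose_def)

lemma diagonal_mat_symmetric:
  assumes "diagonal_mat F"
  shows "symmetric_matrix F"
  using assms unfolding diagonal_mat_def symmetric_matrix_iff by metis

definition diag_matrix :: "('n \<Rightarrow> real) \<Rightarrow> real^'n^'n" where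
  "diag_matrix f = (\<chi> i j. if i = j then f i else 0)"

lemma diagonal_mat_diag_matrix: "diagonal_mat (diag_matrix f)"
  by (simp add: diagonal_mat_def diag_matrix_def)

lemma diag_matrix_diag [simp]: "diag_matrix f $ i $ i = f i"
  by (simp add: diag_matrix_def)

lemma orthogonal_conj_transpose_conj:
  fixes C M :: "real^'n^'n"
  assumes "orthogonal_matrix C"
  shows "transpose C ** (C ** M ** transpose C) ** C = M"
    and "C ** (transpose C ** M ** C) ** transpose C = M"
  using assms by (simp_all add: orthogonal_matrix_def matrix_mul_assoc)
    (simp_all add: matrix_mul_assoc[symmetric])

lemma matrix_conj_entry:
  fixes C M :: "real^'n^'n"
  shows "(C ** M ** transpose C)$i$i' = (\<Sum>j\<in>UNIV. \<Sum>j'\<in>UNIV. C$i$j * M$j$j' * C$i'$j')"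
  by (simp add: matrix_matrix_mult_def transpose_def sum_distrib_right) (rule sum.swap)

lemma matrix_conj_diagonal_entry:
  fixes Q G :: "real^'n^'n"
  assumes "diagonal_mat G"
  shows "(Q ** G ** transpose Q)$i$j = (\<Sum>k\<in>UNIV. Q$i$k * G$k$k * Q$j$k)"
  using diagonal_mat_mult_right[OF assms, of Q]
  by (simp add: matrix_matrix_mult_def transpose_def)

lemma orthogonal_conj_entrywise_diff:
  fixes C M N :: "real^'n^'n"
  assumes C: "orthogonal_matrix C" and MN: "\<forall>k l. \<bar>M$k$l - N$k$l\<bar> \<le> \<delta>"
  shows "\<bar>(C ** M ** transpose C)$i$j - (C ** N ** transpose C)$i$j\<bar> \<le> real CARD('n)^2 * \<delta>"
proof -
  have "0 \<le> \<delta>" using MN abs_ge_zero order_trans by blast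
  have "(C ** M ** transpose C)$i$j - (C ** N ** transpose C)$i$j
      = (\<Sum>k\<in>UNIV. \<Sum>l\<in>UNIV. C$i$k * (M$k$l - N$k$l) * C$j$l)"
    unfolding matrix_conj_entry by (simp add: sum_subtractf algebra_simps)
  also have "\<bar>\<dots>\<bar> \<le> (\<Sum>k\<in>UNIV. \<Sum>l\<in>UNIV. \<bar>C$i$k * (M$k$l - N$k$l) * C$j$l\<bar>)"
    by (rule order_trans[OF sum_abs sum_mono[OF sum_abs]])
  also have "\<dots> \<le> (\<Sum>k\<in>(UNIV::'n set). \<Sum>l\<in>(UNIV::'n set). \<delta>)"
  proof (intro sum_mono)
    fix k l
    have "\<bar>C$i$k\<bar> * \<bar>M$k$l - N$k$l\<bar> * \<bar>C$j$l\<bar> \<le> 1 * \<delta> * 1"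
      using orthogonal_matrix_entry_bound[OF C] MN \<open>0 \<le> \<delta>\<close> by (intro mult_mono) auto
    then show "\<bar>C$i$k * (M$k$l - N$k$l) * C$j$l\<bar> \<le> \<delta>" by (simp add: abs_mult)
  qed
  finally show ?thesis by (simp add: power2_eq_square)
qed

subsection \<open>The spectral theorem for real symmetric matrices\<close>

lemma symmetric_matrix_inner_swap:
  fixes B :: "real^'n^'n"
  assumes "transpose B = B"
  shows "v \<bullet> (B *v u) = (B *v v) \<bullet> u"
  by (metis assms dot_lmul_matrix transpose_matrix_vector)

lemma linear_coeff_zero_if_nonpos:
  fixes a b :: real
  assumes "a \<ge> 0" and "\<forall>t. a * t + b * t^2 \<le> 0"
  shows "a = 0"
proof (rule ccontr)
  assume "a \<noteq> 0"
  with assms(1) have a: "a > 0" by simp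
  define t where "t = a / (\<bar>b\<bar> + 1)"
  have t: "t > 0" using a by (simp add: t_def)
  have "a * t + b * t^2 \<ge> a * t - \<bar>b\<bar> * t^2"
    using abs_ge_minus_self[of "b * t^2"] by (simp add: abs_mult)
  also have "a * t - \<bar>b\<bar> * t^2 = t * (a - \<bar>b\<bar> * t)"
    by (simp add: power2_eq_square algebra_simps)
  also have "a - \<bar>b\<bar> * t = t"
    by (simp add: t_def field_simps)
  finally show False using assms(2) t by (smt (verit) mult_pos_pos)
qed

text \<open>First-order optimality of the Rayleigh quotient: perturbing a maximiser \<open>u\<close> in the
  direction \<open>w = B u - \<lambda> u\<close> changes the quotient by \<open>2t|w|\<^sup>2 + O(t\<^sup>2)\<close>.\<close>
lemma rayleigh_maximizer_eigenvector:
  fixes B :: "real^'n^'n"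
  assumes sym: "transpose B = B" and S: "subspace S" and inv: "\<forall>x\<in>S. B *v x \<in> S"
    and u: "u \<in> S" "u \<bullet> u = 1"
    and max: "\<forall>y\<in>S. y \<bullet> (B *v y) \<le> (u \<bullet> (B *v u)) * (y \<bullet> y)"
  shows "B *v u = (u \<bullet> (B *v u)) *\<^sub>R u"
proof -
  define lam where "lam = u \<bullet> (B *v u)"
  define w where "w = B *v u - lam *\<^sub>R u"
  have wS: "w \<in> S" unfolding w_def using S u inv by (simp add: subspace_diff subspace_scale)
  have wu: "w \<bullet> u = 0" unfolding w_def lam_def using u
    by (simp add: inner_diff_left inner_commute[of "B *v u" u])
  have wBu: "w \<bullet> (B *v u) = w \<bullet> w"
    using wu by (simp add: w_def inner_diff_right inner_commute)
  have uBw: "u \<bullet> (B *v w) = w \<bullet> w"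
    using symmetric_matrix_inner_swap[OF sym, of u w] wBu by (simp add: inner_commute)
  have "2 * (w \<bullet> w) * t + (w \<bullet> (B *v w) - lam * (w \<bullet> w)) * t^2 \<le> 0" for t
  proof -
    have "u + t *\<^sub>R w \<in> S" using S u wS by (simp add: subspace_add subspace_scale)
    then have "(u + t *\<^sub>R w) \<bullet> (B *v (u + t *\<^sub>R w)) \<le> lam * ((u + t *\<^sub>R w) \<bullet> (u + t *\<^sub>R w))"
      using max lam_def by blast
    also have "(u + t *\<^sub>R w) \<bullet> (B *v (u + t *\<^sub>R w)) = lam + 2 * t * (w \<bullet> w) + t^2 * (w \<bullet> (B *v w))"
      using uBw wBu by (simp add: lam_def matrix_vector_right_distrib matrix_vector_mult_scaleR
          inner_add_left inner_add_right power2_eq_square algebra_simps)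
    also have "(u + t *\<^sub>R w) \<bullet> (u + t *\<^sub>R w) = 1 + t^2 * (w \<bullet> w)"
      using u wu by (simp add: inner_add_left inner_add_right inner_commute power2_eq_square)
    finally show ?thesis by (simp add: algebra_simps)
  qed
  then have "2 * (w \<bullet> w) = 0"
    by (intro linear_coeff_zero_if_nonpos) auto
  then show ?thesis by (simp add: w_def lam_def)
qed

lemma invariant_subspace_eigenvector:
  fixes B :: "real^'n^'n"
  assumes sym: "transpose B = B" and S: "subspace S" and nz: "x \<in> S" "x \<noteq> 0"
    and inv: "\<forall>x\<in>S. B *v x \<in> S"
  obtains u where "u \<in> S" "norm u = 1" "B *v u = (u \<bullet> (B *v u)) *\<^sub>R u"
proof -
  define T where "T = S \<inter> sphere 0 1"
  have "compact T" unfolding T_def using closed_subspace[OF S] by (simp add: closed_Int_compact)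
  moreover have "(1 / norm x) *\<^sub>R x \<in> T" using S nz by (simp add: T_def subspace_scale)
  then have "T \<noteq> {}" by blast
  moreover have "continuous_on T (\<lambda>y. y \<bullet> (B *v y))"
    by (intro continuous_intros linear_continuous_on) (auto intro: bounded_linear_intros)
  ultimately obtain u where uT: "u \<in> T" and umax: "\<forall>y\<in>T. y \<bullet> (B *v y) \<le> u \<bullet> (B *v u)"
    using continuous_attains_sup by blast
  have uS: "u \<in> S" and nu: "norm u = 1" using uT by (auto simp: T_def)
  have "y \<bullet> (B *v y) \<le> (u \<bullet> (B *v u)) * (y \<bullet> y)" if y: "y \<in> S" for y
  proof (cases "y = 0")
    case False
    define y' where "y' = (1 / norm y) *\<^sub>R y"
    have "y' \<in> T" using S y False by (simp add: T_def y'_def subspace_scale)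
    then have "y' \<bullet> (B *v y') \<le> u \<bullet> (B *v u)" using umax by blast
    moreover have "y' \<bullet> (B *v y') = y \<bullet> (B *v y) / (y \<bullet> y)"
      by (simp add: y'_def matrix_vector_mult_scaleR power2_eq_square power2_norm_eq_inner[symmetric])
    ultimately show ?thesis using False by (simp add: divide_le_eq mult.commute)
  qed simp
  then have "B *v u = (u \<bullet> (B *v u)) *\<^sub>R u"
    using rayleigh_maximizer_eigenvector[OF sym S inv uS] nu by (simp add: norm_eq_1)
  with uS nu that show thesis by blast
qed

lemma orthonormal_eigenvectors_exist:
  fixes B :: "real^'n^'n"
  assumes sym: "transpose B = B" and k: "k \<le> CARD('n)"
  shows "\<exists>V. finite V \<and> card V = k \<and> (\<forall>v\<in>V. norm v = 1 \<and> (\<exists>\<mu>. B *v v = \<mu> *\<^sub>R v))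
      \<and> (\<forall>v\<in>V. \<forall>v'\<in>V. v \<noteq> v' \<longrightarrow> v \<bullet> v' = 0)"
  using k
proof (induction k)
  case 0
  show ?case by (rule exI[of _ "{}"]) simp
next
  case (Suc k)
  then obtain V where V: "finite V" "card V = k" "\<forall>v\<in>V. norm v = 1 \<and> (\<exists>\<mu>. B *v v = \<mu> *\<^sub>R v)"
    "\<forall>v\<in>V. \<forall>v'\<in>V. v \<noteq> v' \<longrightarrow> v \<bullet> v' = 0" by auto
  define S where "S = {x. \<forall>v\<in>V. orthogonal v x}"
  have S: "subspace S" unfolding S_def by (rule subspace_orthogonal_to_vectors)
  have "dim V < DIM(real^'n)" using dim_le_card'[OF V(1)] V(2) Suc.prems by simp
  then obtain x where "x \<noteq> 0" "\<And>y. y \<in> span V \<Longrightarrow> orthogonal x y"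
    using orthogonal_to_subspace_exists by blast
  then have x: "x \<in> S" "x \<noteq> 0"
    by (auto simp: S_def orthogonal_commute span_base)
  have "orthogonal v (B *v y)" if "y \<in> S" "v \<in> V" for y v
  proof -
    obtain \<mu> where "B *v v = \<mu> *\<^sub>R v" using V(3) \<open>v \<in> V\<close> by blast
    then show ?thesis using that symmetric_matrix_inner_swap[OF sym, of v y]
      by (simp add: S_def orthogonal_def)
  qed
  then have "\<forall>y\<in>S. B *v y \<in> S" by (auto simp: S_def)
  then obtain u where u: "u \<in> S" "norm u = 1" "B *v u = (u \<bullet> (B *v u)) *\<^sub>R u"
    using invariant_subspace_eigenvector[OF sym S x] by blast
  have "u \<notin> V" using u by (auto simp: S_def orthogonal_def)
  then show ?case
    using V u by (intro exI[of _ "insert u V"]) (auto simp: S_def orthogonal_def inner_commute)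
qed

lemma symmetric_matrix_spectral_decomposition:
  fixes B :: "real^'n^'n"
  assumes "symmetric_matrix B"
  obtains Q F where "orthogonal_matrix Q" "diagonal_mat F" "B = Q ** F ** transpose Q"
proof -
  have sym: "transpose B = B" using assms by (simp add: symmetric_matrix_def)
  obtain V where V: "finite V" "card V = CARD('n)" "\<forall>v\<in>V. norm v = 1 \<and> (\<exists>\<mu>. B *v v = \<mu> *\<^sub>R v)"
    "\<forall>v\<in>V. \<forall>v'\<in>V. v \<noteq> v' \<longrightarrow> v \<bullet> v' = 0"
    using orthonormal_eigenvectors_exist[OF sym, of "CARD('n)"] by auto
  obtain b where b: "bij_betw b (UNIV::'n set) V"
    using finite_same_card_bij[of "UNIV::'n set" V] V by auto
  then have bV: "b j \<in> V" and binj: "b j = b j' \<longleftrightarrow> j = j'" for j j'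
    by (auto simp: bij_betw_def inj_def)
  have "\<forall>j. \<exists>\<mu>. B *v b j = \<mu> *\<^sub>R b j" using V(3) bV by blast
  then obtain lam where eig: "B *v b j = lam j *\<^sub>R b j" for j by metis
  define Q :: "real^'n^'n" where "Q = (\<chi> i j. b j $ i)"
  define F where "F = diag_matrix lam"
  have dF: "diagonal_mat F" unfolding F_def by (rule diagonal_mat_diag_matrix)
  have inn: "b j \<bullet> b j' = (if j = j' then 1 else 0)" for j j'
    using V(3,4) bV[of j] bV[of j'] binj[of j j'] by (auto simp: norm_eq_1)
  have "(transpose Q ** Q)$j$j' = (mat 1 :: real^'n^'n)$j$j'" for j j'
    using inn[of j j'] by (simp add: matrix_matrix_mult_def transpose_def Q_def inner_vec_def mat_def)
  then have oQ: "orthogonal_matrix Q" by (simp add: orthogonal_matrix vec_eq_iff)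
  have "(B ** Q)$i$j = (Q ** F)$i$j" for i j
  proof -
    have "(B ** Q)$i$j = (B *v b j)$i"
      by (simp add: matrix_matrix_mult_def matrix_vector_mult_def Q_def)
    also have "\<dots> = (Q ** F)$i$j"
      using eig diagonal_mat_mult_right[OF dF, of Q i j] by (simp add: Q_def F_def)
    finally show ?thesis .
  qed
  then have "B ** Q = Q ** F" by (simp add: vec_eq_iff)
  then have "B = Q ** F ** transpose Q"
    using oQ by (metis matrix_mul_assoc matrix_mul_rid orthogonal_matrix_def)
  with oQ dF that show thesis by blast
qed

subsection \<open>Eigenvalues of a spectral decomposition\<close>

lemma poly_det:
  fixes M :: "real poly^'n^'n"
  shows "poly (det M) t = det (\<chi> i j. poly (M$i$j) t)"
  by (simp add: det_def poly_sum poly_prod)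

lemma charpoly_spectral_decomposition:
  fixes Q F B :: "real^'n^'n"
  assumes Q: "orthogonal_matrix Q" and F: "diagonal_mat F" and B: "B = Q ** F ** transpose Q"
  shows "charpoly B = (\<Prod>j\<in>UNIV. [:- F$j$j, 1:])"
proof -
  have "poly (charpoly B) t = poly (\<Prod>j\<in>UNIV. [:- F$j$j, 1:]) t" for t
  proof -
    define G where "G = diag_matrix (\<lambda>i. t - F$i$i)"
    have "(Q ** G ** transpose Q)$i$j = (if i = j then t else 0) - B$i$j" for i j
    proof -
      have "(Q ** G ** transpose Q)$i$j = (\<Sum>k\<in>UNIV. t * (Q$i$k * Q$j$k) - Q$i$k * F$k$k * Q$j$k)"
        unfolding G_def matrix_conj_diagonal_entry[OF diagonal_mat_diag_matrix]
        by (rule sum.cong) (auto simp: algebra_simps)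
      also have "\<dots> = t * (\<Sum>k\<in>UNIV. Q$i$k * Q$j$k) - (\<Sum>k\<in>UNIV. Q$i$k * F$k$k * Q$j$k)"
        by (simp add: sum_subtractf sum_distrib_left)
      also have "\<dots> = (if i = j then t else 0) - B$i$j"
        using orthogonal_matrix_rows[OF Q, of i j] matrix_conj_diagonal_entry[OF F, of Q i j] B by simp
      finally show ?thesis .
    qed
    then have "(\<chi> i j. poly (((\<chi> i j. if i = j then [:0, 1:] else 0) - (\<chi> i j. [:B$i$j:]) :: real poly^'n^'n)$i$j) t)
        = Q ** G ** transpose Q"
      by (simp add: vec_eq_iff)
    then have "poly (charpoly B) t = det (Q ** G ** transpose Q)"
      unfolding charpoly_def poly_det by simp
    also have "\<dots> = det G * (det Q * det (transpose Q))" by (simp add: det_mul)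
    also have "\<dots> = det G"
      using Q by (metis det_I det_mul mult.right_neutral orthogonal_matrix_def)
    also have "\<dots> = (\<Prod>j\<in>UNIV. t - F$j$j)" by (subst det_diagonal) (auto simp: G_def diag_matrix_def)
    also have "\<dots> = poly (\<Prod>j\<in>UNIV. [:- F$j$j, 1:]) t" by (simp add: poly_prod)
    finally show ?thesis .
  qed
  then show ?thesis using poly_eq_poly_eq_iff by blast
qed

lemma eig_list_spectral_decomposition:
  fixes Q F B :: "real^'n^'n"
  assumes "orthogonal_matrix Q" "diagonal_mat F" "B = Q ** F ** transpose Q"
  shows "set (eig_list B) = range (\<lambda>j. F$j$j)" and "length (eig_list B) = CARD('n)"
proof -
  have "proots (charpoly B) = image_mset (\<lambda>j. F$j$j) (mset_set UNIV)"
    unfolding charpoly_spectral_decomposition[OF assms]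
    by (subst proots_prod) (auto simp: sum_unfold_sum_mset)
  then show "set (eig_list B) = range (\<lambda>j. F$j$j)" and "length (eig_list B) = CARD('n)"
    by (simp_all add: eig_list_def flip: size_mset)
qed

lemma num_distinct_eigs_spectral_decomposition:
  fixes Q F B :: "real^'n^'n"
  assumes "orthogonal_matrix Q" "diagonal_mat F" "B = Q ** F ** transpose Q"
  shows "num_distinct_eigs B = card (range (\<lambda>j. F$j$j))"
  using eig_list_spectral_decomposition(1)[OF assms] by (simp add: num_distinct_eigs_def)

lemma num_distinct_eigs_orthogonal_conj:
  fixes P X :: "real^'n^'n"
  assumes P: "orthogonal_matrix P" and X: "symmetric_matrix X"
  shows "num_distinct_eigs (P ** X ** transpose P) = num_distinct_eigs X"
proof -
  obtain C F where C: "orthogonal_matrix C" and F: "diagonal_mat F" and XC: "X = C ** F ** transpose C"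
    using symmetric_matrix_spectral_decomposition[OF X] .
  have "P ** X ** transpose P = (P ** C) ** F ** transpose (P ** C)"
    by (simp add: XC matrix_transpose_mul matrix_mul_assoc)
  then show ?thesis
    using num_distinct_eigs_spectral_decomposition[OF orthogonal_matrix_mul[OF P C] F]
      num_distinct_eigs_spectral_decomposition[OF C F XC] by simp
qed

subsection \<open>Eigenvalue multiplicities forced by \<open>S(d; l\<^sub>1, \<dots>, l\<^sub>r)\<close>\<close>

lemma card_image_add_blocks_le:
  fixes f :: "'a \<Rightarrow> 'b" and J :: "'i \<Rightarrow> 'a set"
  assumes U: "finite U" and I: "finite I" and JU: "\<forall>j\<in>I. J j \<subseteq> U"
    and disj: "\<forall>j\<in>I. \<forall>j'\<in>I. j \<noteq> j' \<longrightarrow> J j \<inter> J j' = {}"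
    and const: "\<forall>j\<in>I. \<forall>x\<in>J j. \<forall>y\<in>J j. f x = f y"
  shows "card (f ` U) + (\<Sum>j\<in>I. card (J j)) \<le> card U + card I"
proof -
  define JA where "JA = (\<Union>j\<in>I. J j)"
  have JAU: "JA \<subseteq> U" using JU by (auto simp: JA_def)
  have finJ: "finite (J j)" if "j \<in> I" for j using JU U that finite_subset by blast
  have "card JA = (\<Sum>j\<in>I. card (J j))"
    unfolding JA_def by (rule card_UN_disjoint[OF I]) (use finJ disj in blast)+
  moreover have "card (U - JA) + card JA = card U"
    using card_Diff_subset[OF finite_subset[OF JAU U] JAU] card_mono[OF U JAU] by simp
  moreover have "f ` U \<subseteq> f ` (U - JA) \<union> (\<Union>j\<in>I. f ` J j)" by (auto simp: JA_def)
  then have "card (f ` U) \<le> card (f ` (U - JA) \<union> (\<Union>j\<in>I. f ` J j))"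
    by (rule card_mono[rotated]) (use U I finJ in auto)
  moreover have "card (f ` (U - JA) \<union> (\<Union>j\<in>I. f ` J j))
      \<le> card (f ` (U - JA)) + card (\<Union>j\<in>I. f ` J j)" by (rule card_Un_le)
  moreover have "card (f ` (U - JA)) \<le> card (U - JA)" by (rule card_image_le) (use U in simp)
  moreover have "card (\<Union>j\<in>I. f ` J j) \<le> (\<Sum>j\<in>I. card (f ` J j))" by (rule card_UN_le[OF I])
  moreover have "card (f ` J j) \<le> 1" if "j \<in> I" for j
  proof -
    have "finite (f ` J j)" using finJ[OF that] by (rule finite_imageI)
    then show ?thesis
      unfolding One_nat_def card_le_Suc0_iff_eq[OF \<open>finite (f ` J j)\<close>] using const that by blast
  qed
  then have "(\<Sum>j\<in>I. card (f ` J j)) \<le> card I"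
    using sum_mono[of I "\<lambda>j. card (f ` J j)" "\<lambda>_. 1"] by simp
  ultimately show ?thesis by linarith
qed

lemma num_distinct_eigs_le_if_S_set:
  fixes B :: "real^'n^'n"
  assumes B: "B \<in> S_set r ls"
    and l: "int l = int CARD('n) - (\<Sum>j=1..r. (int (ls j) - 1))"
  shows "num_distinct_eigs B \<le> l"
proof -
  obtain J :: "nat \<Rightarrow> nat set" where
    J: "\<forall>j\<in>{1..r}. J j \<subseteq> {1..CARD('n)} \<and> card (J j) = ls j \<and> (\<forall>i\<in>J j. \<forall>i'\<in>J j. E i B = E i' B)"
    and disj: "\<forall>j\<in>{1..r}. \<forall>j'\<in>{1..r}. j \<noteq> j' \<longrightarrow> J j \<inter> J j' = {}"
    using B unfolding S_set_def by blast
  obtain Q F where "orthogonal_matrix Q" "diagonal_mat F" "B = Q ** F ** transpose Q"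
    using symmetric_matrix_spectral_decomposition B by (auto simp: S_set_def)
  then have len: "length (eig_list B) = CARD('n)" by (rule eig_list_spectral_decomposition)
  have "set (eig_list B) \<subseteq> (\<lambda>i. E i B) ` {1..CARD('n)}"
  proof
    fix x assume "x \<in> set (eig_list B)"
    then obtain k where "k < CARD('n)" "x = eig_list B ! k" by (auto simp: in_set_conv_nth len)
    then show "x \<in> (\<lambda>i. E i B) ` {1..CARD('n)}" by (auto simp: E_def intro!: image_eqI[of _ _ "Suc k"])
  qed
  then have "num_distinct_eigs B \<le> card ((\<lambda>i. E i B) ` {1..CARD('n)})"
    unfolding num_distinct_eigs_def by (intro card_mono) auto
  moreover have "card ((\<lambda>i. E i B) ` {1..CARD('n)}) + (\<Sum>j=1..r. card (J j)) \<le> CARD('n) + r"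
    using card_image_add_blocks_le[of "{1..CARD('n)}" "{1..r}" J "\<lambda>i. E i B"] J disj
    by (metis card_atLeastAtMost diff_Suc_1 finite_atLeastAtMost)
  moreover have "(\<Sum>j=1..r. card (J j)) = (\<Sum>j=1..r. ls j)"
    using J by (intro sum.cong) auto
  moreover have "(\<Sum>j=1..r. (int (ls j) - 1)) = int (\<Sum>j=1..r. ls j) - int r"
    by (simp add: sum_subtractf)
  ultimately show ?thesis using l by linarith
qed

subsection \<open>Eigenvalue clusters of a perturbed diagonal matrix\<close>

lemma spectral_decomposition_perturbation:
  fixes C H D0 X :: "real^'n^'n"
  assumes C: "orthogonal_matrix C" and H: "diagonal_mat H" and D0: "diagonal_mat D0"
    and X: "X = C ** H ** transpose C" and XD: "\<forall>i j. \<bar>X$i$j - D0$i$j\<bar> \<le> \<eta>"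
  shows "\<bar>D0$i$i - H$j$j\<bar> * \<bar>C$i$j\<bar> \<le> real CARD('n) * \<eta>"
proof -
  have "X ** C = (C ** H) ** (transpose C ** C)"
    unfolding X by (simp only: matrix_mul_assoc)
  then have "X ** C = C ** H" using C by (simp add: orthogonal_matrix_def)
  then have "(X ** C)$i$j = C$i$j * H$j$j" using diagonal_mat_mult_right[OF H] by simp
  moreover have "(D0 ** C)$i$j = D0$i$i * C$i$j" using diagonal_mat_mult_left[OF D0] by simp
  ultimately have eq: "(H$j$j - D0$i$i) * C$i$j = (\<Sum>p\<in>UNIV. (X$i$p - D0$i$p) * C$p$j)"
    by (simp add: matrix_matrix_mult_def algebra_simps sum_subtractf)
  have "\<bar>D0$i$i - H$j$j\<bar> * \<bar>C$i$j\<bar> = \<bar>(H$j$j - D0$i$i) * C$i$j\<bar>"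
    by (simp add: abs_mult abs_minus_commute)
  also have "\<dots> = \<bar>\<Sum>p\<in>UNIV. (X$i$p - D0$i$p) * C$p$j\<bar>" by (simp only: eq)
  also have "\<dots> \<le> (\<Sum>p\<in>UNIV. \<bar>(X$i$p - D0$i$p) * C$p$j\<bar>)" by (rule sum_abs)
  also have "\<dots> \<le> (\<Sum>p\<in>(UNIV::'n set). \<eta>)"
  proof (rule sum_mono)
    fix p
    have "\<bar>X$i$p - D0$i$p\<bar> * \<bar>C$p$j\<bar> \<le> \<eta> * 1"
      using XD orthogonal_matrix_entry_bound[OF C] by (meson abs_ge_zero mult_mono order_trans)
    then show "\<bar>(X$i$p - D0$i$p) * C$p$j\<bar> \<le> \<eta>" by (simp add: abs_mult)
  qed
  finally show ?thesis by simp
qed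

lemma finite_set_separated:
  fixes A :: "real set"
  assumes "finite A"
  obtains g where "g > 0" "\<forall>x\<in>A. \<forall>y\<in>A. x \<noteq> y \<longrightarrow> g \<le> \<bar>x - y\<bar>"
proof
  define G where "G = (\<lambda>(x, y). \<bar>x - y\<bar>) ` {(x, y). x \<in> A \<and> y \<in> A \<and> x \<noteq> y}"
  have "{(x, y). x \<in> A \<and> y \<in> A \<and> x \<noteq> y} \<subseteq> A \<times> A" by auto
  then have "finite G" unfolding G_def using assms by (intro finite_imageI) (auto dest: finite_subset)
  then show "Min (insert 1 G) > 0" by (auto simp: G_def)
  show "\<forall>x\<in>A. \<forall>y\<in>A. x \<noteq> y \<longrightarrow> Min (insert 1 G) \<le> \<bar>x - y\<bar>"
  proof (intro ballI impI)
    fix x y assume "x \<in> A" "y \<in> A" "x \<noteq> y"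
    then have "\<bar>x - y\<bar> \<in> G" unfolding G_def by (intro image_eqI[of _ _ "(x, y)"]) auto
    with \<open>finite G\<close> show "Min (insert 1 G) \<le> \<bar>x - y\<bar>" by simp
  qed
qed

text \<open>Closeness defines a map from \<open>A\<close> onto \<open>B\<close>, well defined because the points of \<open>B\<close> are more
  than \<open>2e\<close> apart; \<open>|A| \<le> |B|\<close> makes it a bijection.\<close>
lemma near_points_bijection:
  fixes A B :: "real set"
  assumes A: "finite A" and le: "card A \<le> card B"
    and sep: "\<forall>b\<in>B. \<forall>b'\<in>B. b \<noteq> b' \<longrightarrow> g \<le> \<bar>b - b'\<bar>" and e: "2 * e < g"
    and AB: "\<forall>a\<in>A. \<exists>b\<in>B. \<bar>a - b\<bar> \<le> e" and BA: "\<forall>b\<in>B. \<exists>a\<in>A. \<bar>a - b\<bar> \<le> e"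
  shows "card A = card B"
    and "\<lbrakk>a \<in> A; a' \<in> A; b \<in> B; b' \<in> B; \<bar>a - b\<bar> \<le> e; \<bar>a' - b'\<bar> \<le> e; a \<noteq> a'\<rbrakk> \<Longrightarrow> b \<noteq> b'"
proof -
  have uniq: "b = b'" if "b \<in> B" "b' \<in> B" "\<bar>a - b\<bar> \<le> e" "\<bar>a - b'\<bar> \<le> e" for a b b'
  proof (rule ccontr)
    assume "b \<noteq> b'"
    then have "g \<le> \<bar>b - b'\<bar>" using sep that by blast
    then show False using that e by arith
  qed
  define h where "h a = (SOME b. b \<in> B \<and> \<bar>a - b\<bar> \<le> e)" for a
  have h: "h a \<in> B \<and> \<bar>a - h a\<bar> \<le> e" if "a \<in> A" for a
    unfolding h_def using AB that someI_ex[of "\<lambda>b. b \<in> B \<and> \<bar>a - b\<bar> \<le> e"] by blast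
  have "B \<subseteq> h ` A"
  proof
    fix b assume "b \<in> B"
    then obtain a where "a \<in> A" "\<bar>a - b\<bar> \<le> e" using BA by blast
    then have "b = h a" using uniq h \<open>b \<in> B\<close> by blast
    with \<open>a \<in> A\<close> show "b \<in> h ` A" by blast
  qed
  then have hA: "h ` A = B" using h by blast
  then have "card B \<le> card A" using card_image_le[OF A] by blast
  with le show "card A = card B" by simp
  then have "inj_on h A" using hA A by (simp add: eq_card_imp_inj_on)
  moreover assume "a \<in> A" "a' \<in> A" "b \<in> B" "b' \<in> B" "\<bar>a - b\<bar> \<le> e" "\<bar>a' - b'\<bar> \<le> e" "a \<noteq> a'"
  ultimately show "b \<noteq> b'" using h uniq unfolding inj_on_def by metis
qed

lemma spectral_decomposition_eigenvalues_near_diagonal: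
  fixes D C F X :: "real^'n^'n"
  assumes D: "diagonal_mat D" and C: "orthogonal_matrix C" and F: "diagonal_mat F"
    and X: "X = C ** F ** transpose C" and XD: "\<forall>i j. \<bar>X$i$j - D$i$j\<bar> \<le> \<eta>"
  shows "\<forall>j. \<exists>i. \<bar>F$j$j - D$i$i\<bar> \<le> real CARD('n)^2 * \<eta>"
    and "\<forall>i. \<exists>j. \<bar>F$j$j - D$i$i\<bar> \<le> real CARD('n)^2 * \<eta>"
proof -
  define d where "d = real CARD('n)"
  have d: "d \<ge> 1" unfolding d_def by (simp add: Suc_le_eq)
  have near: "\<bar>F$j$j - D$i$i\<bar> \<le> d^2 * \<eta>" if "1 / d \<le> \<bar>C$i$j\<bar>" for i j
  proof -
    have "\<bar>D$i$i - F$j$j\<bar> * (1 / d) \<le> d * \<eta>"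
      using spectral_decomposition_perturbation[OF C F D X XD, of i j] that unfolding d_def
      by (meson abs_ge_zero mult_left_mono order_trans)
    then have "\<bar>D$i$i - F$j$j\<bar> \<le> d * \<eta> * d" using d by (simp add: divide_le_eq)
    then show ?thesis by (simp add: power2_eq_square abs_minus_commute mult_ac)
  qed
  show "\<forall>j. \<exists>i. \<bar>F$j$j - D$i$i\<bar> \<le> real CARD('n)^2 * \<eta>"
    using near orthogonal_matrix_column_large_entry[OF C] unfolding d_def by metis
  show "\<forall>i. \<exists>j. \<bar>F$j$j - D$i$i\<bar> \<le> real CARD('n)^2 * \<eta>"
    using near orthogonal_matrix_row_large_entry[OF C] unfolding d_def by metis
qed

lemma eigenvalue_clusters_near_diagonal:
  fixes D C F X :: "real^'n^'n"
  assumes D: "diagonal_mat D" and C: "orthogonal_matrix C" and F: "diagonal_mat F"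
    and X: "X = C ** F ** transpose C" and XD: "\<forall>i j. \<bar>X$i$j - D$i$j\<bar> \<le> \<eta>"
    and gap: "\<forall>i j. D$i$i \<noteq> D$j$j \<longrightarrow> g \<le> \<bar>D$i$i - D$j$j\<bar>" and g: "g > 0"
    and small: "4 * real CARD('n)^2 * \<eta> \<le> g"
    and le: "card (range (\<lambda>j. F$j$j)) \<le> card (range (\<lambda>i. D$i$i))"
  shows "card (range (\<lambda>j. F$j$j)) = card (range (\<lambda>i. D$i$i))"
    and "\<forall>j j'. F$j$j \<noteq> F$j'$j' \<longrightarrow> g/2 \<le> \<bar>F$j$j - F$j'$j'\<bar>"
    and "\<forall>p j j'. F$j$j \<noteq> F$j'$j' \<longrightarrow>
           \<bar>C$p$j\<bar> \<le> 2 * real CARD('n) * \<eta> / g \<or> \<bar>C$p$j'\<bar> \<le> 2 * real CARD('n) * \<eta> / g"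
proof -
  define d where "d = real CARD('n)"
  define e where "e = real CARD('n)^2 * \<eta>"
  have e: "4 * e \<le> g" using small by (simp add: e_def)
  have far: "\<bar>C$p$j\<bar> \<le> 2 * d * \<eta> / g" if "g/2 \<le> \<bar>D$p$p - F$j$j\<bar>" for p j
  proof -
    have "g/2 * \<bar>C$p$j\<bar> \<le> d * \<eta>"
      using spectral_decomposition_perturbation[OF C F D X XD, of p j] that unfolding d_def
      by (meson abs_ge_zero mult_right_mono order_trans)
    then show ?thesis using g by (simp add: field_simps)
  qed
  let ?A = "range (\<lambda>j. F$j$j)" and ?B = "range (\<lambda>i. D$i$i)"
  have sep: "\<forall>b\<in>?B. \<forall>b'\<in>?B. b \<noteq> b' \<longrightarrow> g \<le> \<bar>b - b'\<bar>" using gap by blast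
  note near_D = spectral_decomposition_eigenvalues_near_diagonal(1)[OF D C F X XD, folded e_def, rule_format]
  note near_F = spectral_decomposition_eigenvalues_near_diagonal(2)[OF D C F X XD, folded e_def, rule_format]
  have AB: "\<forall>a\<in>?A. \<exists>b\<in>?B. \<bar>a - b\<bar> \<le> e" using near_D by blast
  have BA: "\<forall>b\<in>?B. \<exists>a\<in>?A. \<bar>a - b\<bar> \<le> e" using near_F by blast
  have "finite ?A" "2 * e < g" using e g by auto
  note match = near_points_bijection[OF this(1) le sep this(2) AB BA]
  show "card ?A = card ?B" by (rule match(1))
  have clusters: "\<exists>i i'. D$i$i \<noteq> D$i'$i' \<and> \<bar>F$j$j - D$i$i\<bar> \<le> e \<and> \<bar>F$j'$j' - D$i'$i'\<bar> \<le> e"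
    if "F$j$j \<noteq> F$j'$j'" for j j'
  proof -
    obtain i i' where "\<bar>F$j$j - D$i$i\<bar> \<le> e" "\<bar>F$j'$j' - D$i'$i'\<bar> \<le> e"
      using near_D by blast
    moreover from this have "D$i$i \<noteq> D$i'$i'" by (intro match(2)[OF _ _ _ _ _ _ that]) auto
    ultimately show ?thesis by blast
  qed
  show "\<forall>j j'. F$j$j \<noteq> F$j'$j' \<longrightarrow> g/2 \<le> \<bar>F$j$j - F$j'$j'\<bar>"
  proof (intro allI impI)
    fix j j' assume "F$j$j \<noteq> F$j'$j'"
    then obtain i i' where "g \<le> \<bar>D$i$i - D$i'$i'\<bar>" "\<bar>F$j$j - D$i$i\<bar> \<le> e" "\<bar>F$j'$j' - D$i'$i'\<bar> \<le> e"
      using clusters gap by blast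
    then show "g/2 \<le> \<bar>F$j$j - F$j'$j'\<bar>" using e by linarith
  qed
  show "\<forall>p j j'. F$j$j \<noteq> F$j'$j' \<longrightarrow>
      \<bar>C$p$j\<bar> \<le> 2 * real CARD('n) * \<eta> / g \<or> \<bar>C$p$j'\<bar> \<le> 2 * real CARD('n) * \<eta> / g"
  proof (intro allI impI)
    fix p j j' assume "F$j$j \<noteq> F$j'$j'"
    then obtain i i' where ii': "D$i$i \<noteq> D$i'$i'" "\<bar>F$j$j - D$i$i\<bar> \<le> e" "\<bar>F$j'$j' - D$i'$i'\<bar> \<le> e"
      using clusters by blast
    then have "D$p$p \<noteq> D$i$i \<or> D$p$p \<noteq> D$i'$i'" by auto
    then have "g \<le> \<bar>D$p$p - D$i$i\<bar> \<or> g \<le> \<bar>D$p$p - D$i'$i'\<bar>" using gap by blast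
    then have "g/2 \<le> \<bar>D$p$p - F$j$j\<bar> \<or> g/2 \<le> \<bar>D$p$p - F$j'$j'\<bar>"
      using ii'(2,3) e by linarith
    then show "\<bar>C$p$j\<bar> \<le> 2 * real CARD('n) * \<eta> / g \<or> \<bar>C$p$j'\<bar> \<le> 2 * real CARD('n) * \<eta> / g"
      using far unfolding d_def by blast
  qed
qed

subsection \<open>Eigenvectors for a simple spectrum\<close>

definition signed_permutation_matrix :: "('n \<Rightarrow> 'n) \<Rightarrow> ('n \<Rightarrow> real) \<Rightarrow> real^'n^'n" where
  "signed_permutation_matrix \<sigma> s = (\<chi> j m. if j = \<sigma> m then s m else 0)"

lemma matrix_mult_signed_permutation_entry:
  fixes C :: "real^'n^'n"
  shows "(C ** signed_permutation_matrix \<sigma> s)$i$m = C$i$(\<sigma> m) * s m"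
proof -
  have "(C ** signed_permutation_matrix \<sigma> s)$i$m = (\<Sum>j\<in>UNIV. if j = \<sigma> m then C$i$j * s m else 0)"
    by (simp add: matrix_matrix_mult_def signed_permutation_matrix_def if_distrib cong: if_cong)
  then show ?thesis by simp
qed

lemma transpose_signed_permutation_mult_entry:
  fixes M :: "real^'n^'n"
  shows "(transpose (signed_permutation_matrix \<sigma> s) ** M)$m$k = s m * M$(\<sigma> m)$k"
proof -
  have "(transpose (signed_permutation_matrix \<sigma> s) ** M)$m$k
      = (\<Sum>j\<in>UNIV. (if j = \<sigma> m then s m else 0) * M$j$k)"
    by (simp add: matrix_matrix_mult_def transpose_def signed_permutation_matrix_def)
  also have "\<dots> = (\<Sum>j\<in>UNIV. if j = \<sigma> m then s m * M$j$k else 0)"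
    by (rule sum.cong) auto
  finally show ?thesis by simp
qed

lemma signed_permutation_matrix_conj_entry:
  fixes M :: "real^'n^'n" and \<sigma> :: "'n \<Rightarrow> 'n" and s :: "'n \<Rightarrow> real"
  defines "S \<equiv> signed_permutation_matrix \<sigma> s"
  shows "(transpose S ** M ** S)$m$m' = s m * s m' * M$(\<sigma> m)$(\<sigma> m')"
  unfolding S_def matrix_mult_signed_permutation_entry transpose_signed_permutation_mult_entry
  by simp

lemma orthogonal_signed_permutation_matrix:
  fixes \<sigma> :: "'n::finite \<Rightarrow> 'n"
  assumes "inj \<sigma>" and "\<forall>m. s m = 1 \<or> s m = -1"
  shows "orthogonal_matrix (signed_permutation_matrix \<sigma> s)"
proof -
  have "(transpose (signed_permutation_matrix \<sigma> s) ** signed_permutation_matrix \<sigma> s)$m$m'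
      = (mat 1 :: real^'n^'n)$m$m'" for m m'
    using assms unfolding signed_permutation_matrix_conj_entry[where M="mat 1", simplified]
    by (cases "m = m'") (auto simp: mat_def inj_eq, metis mult_1 mult_minus1 minus_minus)
  then show ?thesis by (simp add: orthogonal_matrix vec_eq_iff)
qed

lemma diagonal_mat_signed_permutation_conj:
  fixes \<sigma> :: "'n::finite \<Rightarrow> 'n" and M :: "real^'n^'n"
  assumes "inj \<sigma>" and "diagonal_mat M"
  shows "diagonal_mat (transpose (signed_permutation_matrix \<sigma> s) ** M ** signed_permutation_matrix \<sigma> s)"
  using assms by (simp add: diagonal_mat_def signed_permutation_matrix_conj_entry inj_eq)

lemma orthogonal_matrix_dominant_entry:
  fixes C :: "real^'n^'n" and \<pi> :: "'n \<Rightarrow> 'n"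
  assumes C: "orthogonal_matrix C" and off: "\<forall>i j. i \<noteq> \<pi> j \<longrightarrow> \<bar>C$i$j\<bar> \<le> e"
    and e: "0 \<le> e" "2 * real CARD('n) * e \<le> 1"
  shows "1 - e / 2 \<le> C$(\<pi> j)$j * C$(\<pi> j)$j"
proof -
  have "(\<Sum>i\<in>UNIV - {\<pi> j}. C$i$j * C$i$j) \<le> (\<Sum>i\<in>UNIV - {\<pi> j}. e * e)"
  proof (rule sum_mono)
    fix i assume "i \<in> UNIV - {\<pi> j}"
    then have "\<bar>C$i$j\<bar> * \<bar>C$i$j\<bar> \<le> e * e" using off e(1) by (intro mult_mono) auto
    then show "C$i$j * C$i$j \<le> e * e" by (metis abs_mult_self_eq)
  qed
  also have "\<dots> \<le> real CARD('n) * e * e"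
    by (simp add: card_Diff_subset mult.assoc) (intro mult_right_mono, auto)
  also have "\<dots> \<le> e / 2"
    using mult_right_mono[OF e(2) e(1)] by simp
  moreover have "1 = C$(\<pi> j)$j * C$(\<pi> j)$j + (\<Sum>i\<in>UNIV - {\<pi> j}. C$i$j * C$i$j)"
    using orthogonal_matrix_columns[OF C, of j j] by (simp add: sum.remove)
  ultimately show ?thesis by linarith
qed

text \<open>Two dominant entries in the same row would exceed the unit norm of that row.\<close>
lemma orthogonal_matrix_dominant_entries_inj:
  fixes C :: "real^'n^'n" and \<pi> :: "'n \<Rightarrow> 'n"
  assumes C: "orthogonal_matrix C" and off: "\<forall>i j. i \<noteq> \<pi> j \<longrightarrow> \<bar>C$i$j\<bar> \<le> e"
    and e: "0 \<le> e" "2 * real CARD('n) * e \<le> 1"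
  shows "inj \<pi>"
proof (rule injI, rule ccontr)
  fix j j' assume eq: "\<pi> j = \<pi> j'" and ne: "j \<noteq> j'"
  have "1 * e \<le> real CARD('n) * e" using e(1) by (intro mult_right_mono) (auto simp: Suc_le_eq)
  then have "e \<le> 1/2" using e(2) by linarith
  have "(\<Sum>k\<in>{j, j'}. C$(\<pi> j)$k * C$(\<pi> j)$k) \<le> (\<Sum>k\<in>UNIV. C$(\<pi> j)$k * C$(\<pi> j)$k)"
    by (rule sum_mono2) auto
  also have "\<dots> = 1" using orthogonal_matrix_rows[OF C, of "\<pi> j" "\<pi> j"] by simp
  finally show False
    using ne \<open>e \<le> 1/2\<close> orthogonal_matrix_dominant_entry[OF C off e, of j]
      orthogonal_matrix_dominant_entry[OF C off e, of j'] eq by simp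
qed

lemma orthogonal_matrix_near_signed_permutation:
  fixes C :: "real^'n^'n" and \<pi> :: "'n \<Rightarrow> 'n"
  assumes C: "orthogonal_matrix C" and off: "\<forall>i j. i \<noteq> \<pi> j \<longrightarrow> \<bar>C$i$j\<bar> \<le> e"
    and e: "0 \<le> e" "2 * real CARD('n) * e \<le> 1"
  obtains \<sigma> s where "bij \<sigma>" "\<forall>m. s m = 1 \<or> s m = -1"
    "\<forall>i m. \<bar>(C ** signed_permutation_matrix \<sigma> s)$i$m - mat 1$i$m\<bar> \<le> e"
proof -
  have "bij \<pi>"
    using orthogonal_matrix_dominant_entries_inj[OF C off e] by (simp add: bij_def finite_UNIV_inj_surj)
  define \<sigma> where "\<sigma> = inv \<pi>"
  have \<sigma>: "bij \<sigma>" unfolding \<sigma>_def using \<open>bij \<pi>\<close> by (rule bij_imp_bij_inv)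
  have \<pi>\<sigma>: "\<pi> (\<sigma> m) = m" for m unfolding \<sigma>_def using \<open>bij \<pi>\<close> by (simp add: bij_is_surj surj_f_inv_f)
  define s where "s m = (if C$m$(\<sigma> m) \<ge> 0 then 1 else (-1::real))" for m
  have CS: "(C ** signed_permutation_matrix \<sigma> s)$i$m = C$i$(\<sigma> m) * s m" for i m
    by (rule matrix_mult_signed_permutation_entry)
  have near: "\<bar>C$i$(\<sigma> m) * s m - mat 1$i$m\<bar> \<le> e" for i m
  proof (cases "i = m")
    case True
    have "\<bar>C$m$(\<sigma> m)\<bar> \<le> 1" by (rule orthogonal_matrix_entry_bound[OF C])
    then have "C$m$(\<sigma> m) * C$m$(\<sigma> m) \<le> \<bar>C$m$(\<sigma> m)\<bar>"
      by (metis abs_ge_zero abs_mult_self_eq mult_left_le)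
    moreover have "C$m$(\<sigma> m) * s m = \<bar>C$m$(\<sigma> m)\<bar>" by (simp add: s_def)
    ultimately show ?thesis
      using True orthogonal_matrix_dominant_entry[OF C off e, of "\<sigma> m"] \<open>\<bar>C$m$(\<sigma> m)\<bar> \<le> 1\<close> e(1)
      unfolding \<pi>\<sigma> by (simp add: mat_def)
  next
    case False
    then show ?thesis using off \<pi>\<sigma> by (simp add: mat_def s_def abs_mult)
  qed
  show thesis
  proof (rule that[OF \<sigma>])
    show "\<forall>m. s m = 1 \<or> s m = -1" by (simp add: s_def)
    show "\<forall>i m. \<bar>(C ** signed_permutation_matrix \<sigma> s)$i$m - mat 1$i$m\<bar> \<le> e"
      using near unfolding CS by blast
  qed
qed

lemma simple_spectrum_eigenvectors_localized:
  fixes C H D X :: "real^'n^'n"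
  assumes C: "orthogonal_matrix C" and H: "diagonal_mat H" and D: "diagonal_mat D"
    and X: "X = C ** H ** transpose C" and XD: "\<forall>i j. \<bar>X$i$j - D$i$j\<bar> \<le> \<eta>"
    and gap: "\<forall>i i'. i \<noteq> i' \<longrightarrow> \<tau> \<le> \<bar>D$i$i - D$i'$i'\<bar>"
    and \<tau>: "\<tau> > 0" and small: "2 * real CARD('n)^2 * \<eta> \<le> \<tau>"
  obtains \<pi> where "\<forall>i j. i \<noteq> \<pi> j \<longrightarrow> \<bar>C$i$j\<bar> \<le> 2 * real CARD('n) * \<eta> / \<tau>"
proof
  define d where "d = real CARD('n)"
  have d: "d \<ge> 1" unfolding d_def by (simp add: Suc_le_eq)
  have P: "\<bar>D$i$i - H$j$j\<bar> * \<bar>C$i$j\<bar> \<le> d * \<eta>" for i j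
    unfolding d_def by (rule spectral_decomposition_perturbation[OF C H D X XD])
  define \<pi> where "\<pi> j = (SOME i. 1 / d \<le> \<bar>C$i$j\<bar>)" for j
  have "1 / d \<le> \<bar>C$(\<pi> j)$j\<bar>" for j
    unfolding \<pi>_def d_def by (rule someI_ex) (meson orthogonal_matrix_column_large_entry[OF C])
  then have "\<bar>D$(\<pi> j)$(\<pi> j) - H$j$j\<bar> * (1 / d) \<le> d * \<eta>" for j
    using P by (meson abs_ge_zero mult_left_mono order_trans)
  then have \<pi>_close: "\<bar>D$(\<pi> j)$(\<pi> j) - H$j$j\<bar> \<le> d^2 * \<eta>" for j
    using d by (simp add: power2_eq_square divide_le_eq mult.commute mult.left_commute)
  have close: "\<bar>D$(\<pi> j)$(\<pi> j) - H$j$j\<bar> \<le> \<tau> / 2" for j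
    using \<pi>_close[of j] small unfolding d_def by linarith
  show "\<forall>i j. i \<noteq> \<pi> j \<longrightarrow> \<bar>C$i$j\<bar> \<le> 2 * real CARD('n) * \<eta> / \<tau>"
  proof (intro allI impI)
    fix i j assume "i \<noteq> \<pi> j"
    then have "\<tau> \<le> \<bar>D$i$i - D$(\<pi> j)$(\<pi> j)\<bar>" using gap by blast
    then have "\<tau> / 2 \<le> \<bar>D$i$i - H$j$j\<bar>" using close[of j] by linarith
    then have "\<tau> / 2 * \<bar>C$i$j\<bar> \<le> d * \<eta>"
      using P[of i j] by (meson abs_ge_zero mult_right_mono order_trans)
    then show "\<bar>C$i$j\<bar> \<le> 2 * real CARD('n) * \<eta> / \<tau>" using \<tau> by (simp add: d_def field_simps)
  qed
qed

subsection \<open>Splitting degenerate eigenvalues inside eigenspaces\<close>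

definition block_part :: "real^'n^'n \<Rightarrow> real^'n^'n \<Rightarrow> real^'n^'n" where
  "block_part F M = (\<chi> j j'. if F$j$j = F$j'$j' then M$j$j' else 0)"

lemma sum_sum_product_factor:
  fixes a b w :: "'n::finite \<Rightarrow> real" and c :: "'n \<Rightarrow> 'n \<Rightarrow> real"
  shows "(\<Sum>j\<in>UNIV. \<Sum>j'\<in>UNIV. a j * (\<Sum>p\<in>UNIV. w p * c p j * c p j') * b j')
    = (\<Sum>p\<in>UNIV. w p * (\<Sum>j\<in>UNIV. c p j * a j) * (\<Sum>j'\<in>UNIV. c p j' * b j'))"
proof -
  have "(\<Sum>j\<in>UNIV. \<Sum>j'\<in>UNIV. a j * (\<Sum>p\<in>UNIV. w p * c p j * c p j') * b j')
      = (\<Sum>j\<in>UNIV. \<Sum>j'\<in>UNIV. \<Sum>p\<in>UNIV. w p * (c p j * a j) * (c p j' * b j'))"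
    by (simp add: sum_distrib_left sum_distrib_right mult_ac)
  also have "\<dots> = (\<Sum>j\<in>UNIV. \<Sum>p\<in>UNIV. \<Sum>j'\<in>UNIV. w p * (c p j * a j) * (c p j' * b j'))"
    by (rule sum.cong[OF refl], rule sum.swap)
  also have "\<dots> = (\<Sum>p\<in>UNIV. \<Sum>j\<in>UNIV. \<Sum>j'\<in>UNIV. w p * (c p j * a j) * (c p j' * b j'))"
    by (rule sum.swap)
  also have "\<dots> = (\<Sum>p\<in>UNIV. w p * (\<Sum>j\<in>UNIV. c p j * a j) * (\<Sum>j'\<in>UNIV. c p j' * b j'))"
    by (simp add: sum_distrib_left sum_distrib_right mult_ac)
  finally show ?thesis .
qed

lemma orthogonal_conj_diag_entry:
  fixes C :: "real^'n^'n"
  shows "(transpose C ** diag_matrix lam ** C)$j$j' = (\<Sum>p\<in>UNIV. lam p * C$p$j * C$p$j')"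
  using matrix_conj_diagonal_entry[OF diagonal_mat_diag_matrix, of "transpose C" lam j j']
  by (simp add: transpose_def diag_matrix_def mult_ac)

lemma block_part_quadratic_form_bounds:
  fixes C F :: "real^'n^'n" and lam u :: "'n \<Rightarrow> real"
  defines "G \<equiv> block_part F (transpose C ** diag_matrix lam ** C)"
  assumes C: "orthogonal_matrix C" and lam: "\<forall>p. 0 \<le> lam p \<and> lam p \<le> K"
    and u: "\<forall>j j'. u j \<noteq> 0 \<and> u j' \<noteq> 0 \<longrightarrow> F$j$j = F$j'$j'"
  shows "0 \<le> (\<Sum>j\<in>UNIV. \<Sum>j'\<in>UNIV. u j * G$j$j' * u j')"
    and "(\<Sum>j\<in>UNIV. \<Sum>j'\<in>UNIV. u j * G$j$j' * u j') \<le> K * (\<Sum>j\<in>UNIV. u j * u j)"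
proof -
  define v where "v p = (\<Sum>j\<in>UNIV. C$p$j * u j)" for p
  have "(\<Sum>j\<in>UNIV. \<Sum>j'\<in>UNIV. u j * G$j$j' * u j')
      = (\<Sum>j\<in>UNIV. \<Sum>j'\<in>UNIV. u j * (\<Sum>p\<in>UNIV. lam p * C$p$j * C$p$j') * u j')"
  proof (intro sum.cong refl)
    fix j j'
    show "u j * G$j$j' * u j' = u j * (\<Sum>p\<in>UNIV. lam p * C$p$j * C$p$j') * u j'"
      using u[rule_format, of j j']
      by (cases "u j = 0 \<or> u j' = 0") (auto simp: G_def block_part_def orthogonal_conj_diag_entry)
  qed
  also have "\<dots> = (\<Sum>p\<in>UNIV. lam p * v p * v p)"
    unfolding v_def by (rule sum_sum_product_factor)
  finally have eq: "(\<Sum>j\<in>UNIV. \<Sum>j'\<in>UNIV. u j * G$j$j' * u j') = (\<Sum>p\<in>UNIV. lam p * v p * v p)" .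
  have "(\<Sum>p\<in>UNIV. v p * v p) = (\<Sum>j\<in>UNIV. \<Sum>j'\<in>UNIV. u j * (\<Sum>p\<in>UNIV. 1 * C$p$j * C$p$j') * u j')"
    unfolding v_def using sum_sum_product_factor[of u "\<lambda>_. 1" "\<lambda>p j. C$p$j" u] by simp
  also have "\<dots> = (\<Sum>j\<in>UNIV. \<Sum>j'\<in>UNIV. if j' = j then u j * u j else 0)"
    using orthogonal_matrix_columns[OF C] by (intro sum.cong refl) auto
  finally have norm: "(\<Sum>p\<in>UNIV. v p * v p) = (\<Sum>j\<in>UNIV. u j * u j)" by simp
  show "0 \<le> (\<Sum>j\<in>UNIV. \<Sum>j'\<in>UNIV. u j * G$j$j' * u j')"
    unfolding eq using lam by (intro sum_nonneg) (simp add: mult.assoc)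
  have "(\<Sum>p\<in>UNIV. lam p * v p * v p) \<le> (\<Sum>p\<in>UNIV. K * (v p * v p))"
    using lam by (intro sum_mono) (simp add: mult.assoc mult_right_mono)
  also have "\<dots> = K * (\<Sum>j\<in>UNIV. u j * u j)" by (simp add: sum_distrib_left[symmetric] norm)
  finally show "(\<Sum>j\<in>UNIV. \<Sum>j'\<in>UNIV. u j * G$j$j' * u j') \<le> K * (\<Sum>j\<in>UNIV. u j * u j)"
    unfolding eq .
qed

lemma mult_le_if_one_factor_le:
  fixes x y e :: real
  assumes "0 \<le> x" "0 \<le> y" "x \<le> 1" "y \<le> 1" "x \<le> e \<or> y \<le> e"
  shows "x * y \<le> e"
proof (cases "x \<le> e")
  case True
  have "x * y \<le> x * 1" using assms by (intro mult_left_mono) auto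
  with True show ?thesis by simp
next
  case False
  with assms have "y \<le> e" by simp
  have "x * y \<le> 1 * y" using assms by (intro mult_right_mono) auto
  with \<open>y \<le> e\<close> show ?thesis by simp
qed

text \<open>Since \<open>C\<^sup>T \<Lambda> C\<close> conjugates back to \<open>\<Lambda>\<close>, dropping its entries between different blocks
  of \<open>F\<close>, where \<open>C\<close> has a small factor, moves the conjugate only slightly.\<close>
lemma block_part_conj_near_diag:
  fixes C F :: "real^'n^'n" and lam :: "'n \<Rightarrow> real"
  defines "G \<equiv> block_part F (transpose C ** diag_matrix lam ** C)"
  assumes C: "orthogonal_matrix C" and lam: "\<forall>p. \<bar>lam p\<bar> \<le> K"
    and cross: "\<forall>p j j'. F$j$j \<noteq> F$j'$j' \<longrightarrow> \<bar>C$p$j\<bar> \<le> e \<or> \<bar>C$p$j'\<bar> \<le> e"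
    and e: "e \<ge> 0"
  shows "\<bar>(C ** G ** transpose C)$i$i' - diag_matrix lam$i$i'\<bar> \<le> real CARD('n)^3 * K * e"
proof -
  define d where "d = real CARD('n)"
  define M where "M = transpose C ** diag_matrix lam ** C"
  have K: "0 \<le> K" using lam abs_ge_zero order_trans by blast
  have "diag_matrix lam = C ** M ** transpose C"
    unfolding M_def orthogonal_conj_transpose_conj(2)[OF C] ..
  then have "(C ** G ** transpose C)$i$i' - diag_matrix lam$i$i'
      = (\<Sum>j\<in>UNIV. \<Sum>j'\<in>UNIV. C$i$j * G$j$j' * C$i'$j' - C$i$j * M$j$j' * C$i'$j')"
    by (simp only: matrix_conj_entry sum_subtractf)
  also have "\<dots> = (\<Sum>j\<in>UNIV. \<Sum>j'\<in>UNIV. C$i$j * (G$j$j' - M$j$j') * C$i'$j')"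
    by (simp add: algebra_simps)
  also have "\<bar>\<dots>\<bar> \<le> (\<Sum>j\<in>UNIV. \<Sum>j'\<in>UNIV. \<bar>C$i$j * (G$j$j' - M$j$j') * C$i'$j'\<bar>)"
    by (rule order_trans[OF sum_abs sum_mono[OF sum_abs]])
  also have "\<dots> \<le> (\<Sum>j\<in>(UNIV::'n set). \<Sum>j'\<in>(UNIV::'n set). d * K * e)"
  proof (intro sum_mono)
    fix j j'
    have "\<bar>G$j$j' - M$j$j'\<bar> \<le> d * K * e"
    proof (cases "F$j$j = F$j'$j'")
      case False
      have "\<bar>M$j$j'\<bar> \<le> (\<Sum>p\<in>UNIV. \<bar>lam p * C$p$j * C$p$j'\<bar>)"
        unfolding M_def orthogonal_conj_diag_entry by (rule sum_abs)
      also have "\<dots> \<le> (\<Sum>p\<in>(UNIV::'n set). K * e)"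
      proof (rule sum_mono)
        fix p
        have "\<bar>C$p$j\<bar> * \<bar>C$p$j'\<bar> \<le> e"
          using cross[rule_format, OF False, of p] orthogonal_matrix_entry_bound[OF C, of p j]
            orthogonal_matrix_entry_bound[OF C, of p j'] by (intro mult_le_if_one_factor_le) auto
        then have "\<bar>lam p\<bar> * (\<bar>C$p$j\<bar> * \<bar>C$p$j'\<bar>) \<le> K * e"
          using lam K by (intro mult_mono) auto
        then show "\<bar>lam p * C$p$j * C$p$j'\<bar> \<le> K * e" by (simp add: abs_mult mult.assoc)
      qed
      finally show ?thesis using False by (simp add: G_def M_def block_part_def d_def)
    next
      case True
      with K e show ?thesis by (simp add: G_def M_def block_part_def d_def)
    qed
    then have "\<bar>C$i$j\<bar> * \<bar>G$j$j' - M$j$j'\<bar> * \<bar>C$i'$j'\<bar> \<le> 1 * (d * K * e) * 1"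
      using orthogonal_matrix_entry_bound[OF C] by (intro mult_mono) auto
    then show "\<bar>C$i$j * (G$j$j' - M$j$j') * C$i'$j'\<bar> \<le> d * K * e" by (simp add: abs_mult)
  qed
  also have "\<dots> = d^3 * K * e" by (simp add: d_def power3_eq_cube)
  finally show ?thesis by (simp add: d_def)
qed

text \<open>For an eigenvector of \<open>F + \<tau> G\<close> with eigenvalue \<open>h\<close>, its part \<open>u\<close> in the eigenspace of \<open>F\<close>
  for \<open>\<nu>\<close> satisfies \<open>\<tau> G u = (h - \<nu>) u\<close>; the bounds on \<open>G\<close> then give \<open>0 \<le> h - \<nu> \<le> \<tau> K\<close> unless
  \<open>u = 0\<close>.\<close>
lemma block_perturbation_eigenvalue_shift:
  fixes F G R H :: "real^'n^'n" and \<tau> K :: real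
  assumes F: "diagonal_mat F" and H: "diagonal_mat H" and R: "orthogonal_matrix R"
    and G_blocks: "\<forall>j j'. F$j$j \<noteq> F$j'$j' \<longrightarrow> G$j$j' = 0"
    and G_bounds: "\<forall>u. (\<forall>j j'. u j \<noteq> 0 \<and> u j' \<noteq> 0 \<longrightarrow> F$j$j = F$j'$j') \<longrightarrow>
        0 \<le> (\<Sum>j\<in>UNIV. \<Sum>j'\<in>UNIV. u j * G$j$j' * u j') \<and>
        (\<Sum>j\<in>UNIV. \<Sum>j'\<in>UNIV. u j * G$j$j' * u j') \<le> K * (\<Sum>j\<in>UNIV. u j * u j)"
    and \<tau>: "\<tau> > 0"
    and Y: "F + \<tau> *\<^sub>R G = R ** H ** transpose R"
    and "R$j$m \<noteq> 0"
  shows "0 \<le> H$m$m - F$j$j \<and> H$m$m - F$j$j \<le> \<tau> * K"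
proof -
  have "(F + \<tau> *\<^sub>R G) ** R = (R ** H) ** (transpose R ** R)"
    unfolding Y by (simp only: matrix_mul_assoc)
  then have YR: "(F + \<tau> *\<^sub>R G) ** R = R ** H" using R by (simp add: orthogonal_matrix_def)
  have eigen: "F$i$i * R$i$m + \<tau> * (\<Sum>k\<in>UNIV. G$i$k * R$k$m) = H$m$m * R$i$m" for i
  proof -
    have "((F + \<tau> *\<^sub>R G) ** R)$i$m = (F ** R)$i$m + \<tau> * (\<Sum>k\<in>UNIV. G$i$k * R$k$m)"
      by (simp add: matrix_matrix_mult_def sum.distrib sum_distrib_left algebra_simps)
    then show ?thesis using YR diagonal_mat_mult_left[OF F, of R i m] diagonal_mat_mult_right[OF H, of R i m]
      by (simp add: mult.commute)
  qed
  define \<nu> where "\<nu> = F$j$j"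
  define u where "u k = (if F$k$k = \<nu> then R$k$m else 0)" for k
  have Gu: "\<tau> * (\<Sum>k\<in>UNIV. G$i$k * u k) = (H$m$m - \<nu>) * u i" for i
  proof (cases "F$i$i = \<nu>")
    case True
    have "(\<Sum>k\<in>UNIV. G$i$k * u k) = (\<Sum>k\<in>UNIV. G$i$k * R$k$m)"
      by (rule sum.cong) (use G_blocks True in \<open>auto simp: u_def\<close>)
    then show ?thesis using eigen[of i] True by (simp add: u_def algebra_simps)
  next
    case False
    have "(\<Sum>k\<in>UNIV. G$i$k * u k) = (\<Sum>k\<in>(UNIV::'n set). 0)"
      by (rule sum.cong) (use G_blocks False in \<open>auto simp: u_def\<close>)
    then show ?thesis using False by (simp add: u_def)
  qed
  have "\<tau> * (\<Sum>k\<in>UNIV. \<Sum>k'\<in>UNIV. u k * G$k$k' * u k')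
      = (\<Sum>k\<in>UNIV. u k * (\<tau> * (\<Sum>k'\<in>UNIV. G$k$k' * u k')))"
    by (simp add: sum_distrib_left mult_ac)
  also have "\<dots> = (H$m$m - \<nu>) * (\<Sum>k\<in>UNIV. u k * u k)"
    unfolding Gu by (simp add: sum_distrib_left mult_ac)
  finally have eq: "\<tau> * (\<Sum>k\<in>UNIV. \<Sum>k'\<in>UNIV. u k * G$k$k' * u k') = (H$m$m - \<nu>) * (\<Sum>k\<in>UNIV. u k * u k)" .
  have "0 < (u j)^2" using assms(8) by (simp add: u_def \<nu>_def)
  also have "\<dots> \<le> (\<Sum>k\<in>UNIV. u k * u k)" unfolding power2_eq_square by (rule member_le_sum) auto
  finally have pos: "(\<Sum>k\<in>UNIV. u k * u k) > 0" .
  have "\<forall>k k'. u k \<noteq> 0 \<and> u k' \<noteq> 0 \<longrightarrow> F$k$k = F$k'$k'" by (auto simp: u_def)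
  then have q: "0 \<le> (\<Sum>k\<in>UNIV. \<Sum>k'\<in>UNIV. u k * G$k$k' * u k')"
    "(\<Sum>k\<in>UNIV. \<Sum>k'\<in>UNIV. u k * G$k$k' * u k') \<le> K * (\<Sum>k\<in>UNIV. u k * u k)"
    using G_bounds by blast+
  have "0 \<le> (H$m$m - \<nu>) * (\<Sum>k\<in>UNIV. u k * u k)"
    unfolding eq[symmetric] using q(1) \<tau> by simp
  moreover have "\<tau> * (\<Sum>k\<in>UNIV. \<Sum>k'\<in>UNIV. u k * G$k$k' * u k') \<le> \<tau> * (K * (\<Sum>k\<in>UNIV. u k * u k))"
    using q(2) \<tau> by (intro mult_left_mono) auto
  then have "(H$m$m - \<nu>) * (\<Sum>k\<in>UNIV. u k * u k) \<le> (\<tau> * K) * (\<Sum>k\<in>UNIV. u k * u k)"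
    unfolding eq by (simp add: mult.assoc)
  ultimately show ?thesis using pos by (simp add: \<nu>_def zero_le_mult_iff)
qed

lemma conj_diagonal_if_columns_in_eigenspaces:
  fixes F R :: "real^'n^'n"
  assumes F: "diagonal_mat F" and R: "orthogonal_matrix R"
    and blocks: "\<And>j j' m. R$j$m \<noteq> 0 \<Longrightarrow> R$j'$m \<noteq> 0 \<Longrightarrow> F$j$j = F$j'$j'"
  shows "diagonal_mat (transpose R ** F ** R)"
  unfolding diagonal_mat_def
proof (intro allI impI)
  fix m m' :: 'n assume "m \<noteq> m'"
  have entry: "(transpose R ** F ** R)$m$m' = (\<Sum>k\<in>UNIV. R$k$m * F$k$k * R$k$m')"
    using matrix_conj_diagonal_entry[OF F, of "transpose R" m m'] by (simp add: transpose_def)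
  show "(transpose R ** F ** R)$m$m' = 0"
  proof (cases "\<exists>j. R$j$m' \<noteq> 0")
    case True
    then obtain j where j: "R$j$m' \<noteq> 0" by blast
    have "(\<Sum>k\<in>UNIV. R$k$m * F$k$k * R$k$m') = (\<Sum>k\<in>UNIV. F$j$j * (R$k$m * R$k$m'))"
      by (rule sum.cong) (use blocks[OF _ j] in \<open>auto simp: mult_ac\<close>)
    also have "\<dots> = 0"
      using orthogonal_matrix_columns[OF R, of m m'] \<open>m \<noteq> m'\<close> by (simp add: sum_distrib_left[symmetric])
    finally show ?thesis using entry by simp
  qed (use entry in simp)
qed

text \<open>Diagonality of \<open>R\<^sup>T F R\<close> means that each eigenvector of \<open>F + \<tau> G\<close> lies in a single
  eigenspace of \<open>F\<close>.\<close>
lemma block_perturbation_eigenvectors: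
  fixes F G R H :: "real^'n^'n" and \<tau> K :: real
  assumes F: "diagonal_mat F" and H: "diagonal_mat H" and R: "orthogonal_matrix R"
    and G_blocks: "\<forall>j j'. F$j$j \<noteq> F$j'$j' \<longrightarrow> G$j$j' = 0"
    and G_bounds: "\<forall>u. (\<forall>j j'. u j \<noteq> 0 \<and> u j' \<noteq> 0 \<longrightarrow> F$j$j = F$j'$j') \<longrightarrow>
        0 \<le> (\<Sum>j\<in>UNIV. \<Sum>j'\<in>UNIV. u j * G$j$j' * u j') \<and>
        (\<Sum>j\<in>UNIV. \<Sum>j'\<in>UNIV. u j * G$j$j' * u j') \<le> K * (\<Sum>j\<in>UNIV. u j * u j)"
    and \<tau>: "\<tau> > 0"
    and Y: "F + \<tau> *\<^sub>R G = R ** H ** transpose R"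
    and sep: "\<forall>j j'. F$j$j \<noteq> F$j'$j' \<longrightarrow> \<tau> * K < \<bar>F$j$j - F$j'$j'\<bar>"
  shows "diagonal_mat (transpose R ** F ** R)"
proof (rule conj_diagonal_if_columns_in_eigenspaces[OF F R], rule ccontr)
  fix j j' m assume "R$j$m \<noteq> 0" "R$j'$m \<noteq> 0" "F$j$j \<noteq> F$j'$j'"
  note shift = block_perturbation_eigenvalue_shift[OF F H R G_blocks G_bounds \<tau> Y]
  have "\<bar>F$j$j - F$j'$j'\<bar> \<le> \<tau> * K"
    using shift[OF \<open>R$j$m \<noteq> 0\<close>] shift[OF \<open>R$j'$m \<noteq> 0\<close>] by linarith
  with sep \<open>F$j$j \<noteq> F$j'$j'\<close> show False by force
qed

lemma symmetric_block_part:
  assumes "symmetric_matrix M"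
  shows "symmetric_matrix (block_part F M)"
  using assms by (simp add: symmetric_matrix_iff block_part_def)

lemma separated_labels_exist:
  obtains lam :: "'n::finite \<Rightarrow> real"
  where "\<forall>p. 0 \<le> lam p \<and> lam p \<le> real CARD('n)"
    and "\<forall>p p'. p \<noteq> p' \<longrightarrow> 1 \<le> \<bar>lam p - lam p'\<bar>"
proof -
  obtain ix :: "'n \<Rightarrow> nat" where ix: "bij_betw ix (UNIV::'n set) {0..<CARD('n)}"
    using ex_bij_betw_finite_nat[of "UNIV::'n set"] by auto
  show thesis
  proof (rule that[of "\<lambda>p. real (ix p)"])
    show "\<forall>p. 0 \<le> real (ix p) \<and> real (ix p) \<le> real CARD('n)"
      using bij_betwE[OF ix] by (auto simp: less_imp_le_nat)
    show "\<forall>p p'. p \<noteq> p' \<longrightarrow> 1 \<le> \<bar>real (ix p) - real (ix p')\<bar>"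
    proof (intro allI impI)
      fix p p' :: 'n assume "p \<noteq> p'"
      then have "ix p \<noteq> ix p'" using bij_betw_imp_inj_on[OF ix] by (meson UNIV_I inj_on_def)
      then show "1 \<le> \<bar>real (ix p) - real (ix p')\<bar>" by (auto simp: nat_neq_iff nat_less_real_le)
    qed
  qed
qed

lemma block_part_eigenbasis:
  fixes C F :: "real^'n^'n" and lam :: "'n \<Rightarrow> real"
  defines "G \<equiv> block_part F (transpose C ** diag_matrix lam ** C)"
  assumes C: "orthogonal_matrix C" and F: "diagonal_mat F" and lam: "\<forall>p. 0 \<le> lam p \<and> lam p \<le> K"
    and \<tau>: "\<tau> > 0" and F_gap: "\<forall>j j'. F$j$j \<noteq> F$j'$j' \<longrightarrow> \<tau> * K < \<bar>F$j$j - F$j'$j'\<bar>"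
  obtains R H where "orthogonal_matrix R" "diagonal_mat H" "F + \<tau> *\<^sub>R G = R ** H ** transpose R"
    "diagonal_mat (transpose R ** F ** R)"
proof -
  have "symmetric_matrix (transpose C ** diag_matrix lam ** C)"
    using diagonal_mat_symmetric[OF diagonal_mat_diag_matrix[of lam]]
    by (simp add: symmetric_matrix_def matrix_transpose_mul matrix_mul_assoc)
  then have "symmetric_matrix G" unfolding G_def by (rule symmetric_block_part)
  then have "symmetric_matrix (F + \<tau> *\<^sub>R G)"
    using diagonal_mat_symmetric[OF F] by (simp add: symmetric_matrix_iff)
  then obtain R H where R: "orthogonal_matrix R" and H: "diagonal_mat H"
    and Y: "F + \<tau> *\<^sub>R G = R ** H ** transpose R"
    using symmetric_matrix_spectral_decomposition by metis
  have "\<forall>j j'. F$j$j \<noteq> F$j'$j' \<longrightarrow> G$j$j' = 0" by (simp add: G_def block_part_def)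
  moreover have "\<forall>u. (\<forall>j j'. u j \<noteq> 0 \<and> u j' \<noteq> 0 \<longrightarrow> F$j$j = F$j'$j') \<longrightarrow>
      0 \<le> (\<Sum>j\<in>UNIV. \<Sum>j'\<in>UNIV. u j * G$j$j' * u j') \<and>
      (\<Sum>j\<in>UNIV. \<Sum>j'\<in>UNIV. u j * G$j$j' * u j') \<le> K * (\<Sum>j\<in>UNIV. u j * u j)"
    using block_part_quadratic_form_bounds[OF C lam] unfolding G_def by blast
  ultimately have "diagonal_mat (transpose R ** F ** R)"
    using block_perturbation_eigenvectors[OF F H R _ _ \<tau> Y F_gap] by blast
  with R H Y that show thesis by blast
qed

lemma diag_shift_separated:
  fixes D :: "real^'n^'n" and lam :: "'n \<Rightarrow> real"
  assumes lam: "\<forall>p. 0 \<le> lam p \<and> lam p \<le> K" and lam_sep: "\<forall>p p'. p \<noteq> p' \<longrightarrow> 1 \<le> \<bar>lam p - lam p'\<bar>"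
    and \<tau>: "\<tau> > 0" and D_gap: "\<forall>i i'. D$i$i \<noteq> D$i'$i' \<longrightarrow> \<tau> * (K + 1) \<le> \<bar>D$i$i - D$i'$i'\<bar>"
  shows "\<forall>i i'. i \<noteq> i' \<longrightarrow> \<tau> \<le> \<bar>(D$i$i + \<tau> * lam i) - (D$i'$i' + \<tau> * lam i')\<bar>"
proof (intro allI impI)
  fix i i' :: 'n assume "i \<noteq> i'"
  then have "1 \<le> \<bar>lam i - lam i'\<bar>" using lam_sep by blast
  moreover have "\<bar>lam i - lam i'\<bar> \<le> K" using lam[rule_format, of i] lam[rule_format, of i'] by linarith
  ultimately have lam_diff: "\<tau> \<le> \<bar>\<tau> * (lam i - lam i')\<bar>" "\<bar>\<tau> * (lam i - lam i')\<bar> \<le> \<tau> * K"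
    using \<tau> by (auto simp: abs_mult)
  have "(D$i$i + \<tau> * lam i) - (D$i'$i' + \<tau> * lam i') = (D$i$i - D$i'$i') + \<tau> * (lam i - lam i')"
    by (simp add: algebra_simps)
  moreover have "\<tau> * (K + 1) \<le> \<bar>D$i$i - D$i'$i'\<bar>" if "D$i$i \<noteq> D$i'$i'" using D_gap that by blast
  ultimately show "\<tau> \<le> \<bar>(D$i$i + \<tau> * lam i) - (D$i'$i' + \<tau> * lam i')\<bar>"
    using lam_diff by (cases "D$i$i = D$i'$i'") (auto simp: algebra_simps)
qed

lemma block_perturbation_conj_near_shifted_diag:
  fixes D C F X :: "real^'n^'n" and lam :: "'n \<Rightarrow> real"
  defines "G \<equiv> block_part F (transpose C ** diag_matrix lam ** C)"
  assumes D: "diagonal_mat D" and C: "orthogonal_matrix C"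
    and X: "X = C ** F ** transpose C" and XD: "\<forall>i j. \<bar>X$i$j - D$i$j\<bar> \<le> \<eta>"
    and cross: "\<forall>p j j'. F$j$j \<noteq> F$j'$j' \<longrightarrow> \<bar>C$p$j\<bar> \<le> e \<or> \<bar>C$p$j'\<bar> \<le> e"
    and e: "e \<ge> 0" and lam: "\<forall>p. 0 \<le> lam p \<and> lam p \<le> real CARD('n)" and \<tau>: "\<tau> \<ge> 0"
  shows "\<bar>(C ** (F + \<tau> *\<^sub>R G) ** transpose C)$i$i' - diag_matrix (\<lambda>i. D$i$i + \<tau> * lam i)$i$i'\<bar>
    \<le> \<eta> + \<tau> * real CARD('n)^4 * e"
proof -
  define d where "d = real CARD('n)"
  have "(C ** (F + \<tau> *\<^sub>R G) ** transpose C)$i$i' - diag_matrix (\<lambda>i. D$i$i + \<tau> * lam i)$i$i'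
      = (X$i$i' - D$i$i') + \<tau> * ((C ** G ** transpose C)$i$i' - diag_matrix lam$i$i')"
    using D by (simp add: X matrix_conj_entry diag_matrix_def diagonal_mat_def
        algebra_simps sum.distrib sum_distrib_left)
  moreover have "\<bar>(C ** G ** transpose C)$i$i' - diag_matrix lam$i$i'\<bar> \<le> d^3 * d * e"
    using block_part_conj_near_diag[OF C _ cross e, of lam d i i'] lam by (simp add: G_def d_def)
  then have "\<bar>\<tau> * ((C ** G ** transpose C)$i$i' - diag_matrix lam$i$i')\<bar> \<le> \<tau> * (d^3 * d * e)"
    using \<tau> by (simp add: abs_mult mult_left_mono)
  moreover have "\<bar>X$i$i' - D$i$i'\<bar> \<le> \<eta>" using XD by blast
  ultimately have "\<bar>(C ** (F + \<tau> *\<^sub>R G) ** transpose C)$i$i' - diag_matrix (\<lambda>i. D$i$i + \<tau> * lam i)$i$i'\<bar>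
      \<le> \<eta> + \<tau> * (d^3 * d * e)"
    using abs_triangle_ineq by (smt (verit))
  then show ?thesis by (simp add: d_def power_def mult_ac)
qed

text \<open>The degenerate eigenvalues of \<open>X = C F C\<^sup>T\<close> are split by adding \<open>\<tau> C G C\<^sup>T\<close>, where
  \<open>G\<close> is the block part of \<open>C\<^sup>T \<Lambda> C\<close> for labels \<open>\<Lambda>\<close> at distance at least \<open>1\<close>. The eigenvectors
  \<open>C R\<close> of the new matrix are still eigenvectors of \<open>X\<close>, and as the new matrix is close to the
  diagonal \<open>D + \<tau> \<Lambda>\<close> with simple spectrum, they are close to a signed permutation of the
  coordinate vectors.\<close>
lemma eigenbasis_near_identity:
  fixes D C F X :: "real^'n^'n"
  defines "d \<equiv> real CARD('n)"
  assumes D: "diagonal_mat D" and C: "orthogonal_matrix C" and F: "diagonal_mat F"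
    and X: "X = C ** F ** transpose C" and XD: "\<forall>i j. \<bar>X$i$j - D$i$j\<bar> \<le> \<eta>"
    and D_gap: "\<forall>i i'. D$i$i \<noteq> D$i'$i' \<longrightarrow> 2 * \<tau> * d \<le> \<bar>D$i$i - D$i'$i'\<bar>"
    and F_gap: "\<forall>j j'. F$j$j \<noteq> F$j'$j' \<longrightarrow> 2 * \<tau> * d \<le> \<bar>F$j$j - F$j'$j'\<bar>"
    and cross: "\<forall>p j j'. F$j$j \<noteq> F$j'$j' \<longrightarrow> \<bar>C$p$j\<bar> \<le> e \<or> \<bar>C$p$j'\<bar> \<le> e"
    and e: "e \<ge> 0" and \<tau>: "\<tau> > 0"
    and \<zeta>: "\<eta> + \<tau> * d^4 * e \<le> \<zeta>" and small: "2 * d^2 * \<zeta> \<le> \<tau>" "2 * d * (2 * d * \<zeta> / \<tau>) \<le> 1"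
  obtains C' F' where "orthogonal_matrix C'" "diagonal_mat F'" "X = C' ** F' ** transpose C'"
    "\<forall>i m. \<bar>C'$i$m - mat 1$i$m\<bar> \<le> 2 * d * \<zeta> / \<tau>"
proof -
  have d: "d \<ge> 1" unfolding d_def by (simp add: Suc_le_eq)
  obtain lam :: "'n \<Rightarrow> real" where lam: "\<forall>p. 0 \<le> lam p \<and> lam p \<le> d"
    and lam_sep: "\<forall>p p'. p \<noteq> p' \<longrightarrow> 1 \<le> \<bar>lam p - lam p'\<bar>"
    using separated_labels_exist unfolding d_def by blast
  define G where "G = block_part F (transpose C ** diag_matrix lam ** C)"
  have "\<tau> * d < 2 * \<tau> * d" using \<tau> d by simp
  then have "\<forall>j j'. F$j$j \<noteq> F$j'$j' \<longrightarrow> \<tau> * d < \<bar>F$j$j - F$j'$j'\<bar>" using F_gap by force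
  then obtain R H where R: "orthogonal_matrix R" and H: "diagonal_mat H"
    and Y: "F + \<tau> *\<^sub>R G = R ** H ** transpose R" and RFR: "diagonal_mat (transpose R ** F ** R)"
    using block_part_eigenbasis[OF C F lam \<tau>] unfolding G_def by blast
  define C2 where "C2 = C ** R"
  have C2: "orthogonal_matrix C2" unfolding C2_def using C R by (rule orthogonal_matrix_mul)
  define D2 where "D2 = diag_matrix (\<lambda>i. D$i$i + \<tau> * lam i)"
  have D2: "diagonal_mat D2" unfolding D2_def by (rule diagonal_mat_diag_matrix)
  have "C2 ** H ** transpose C2 = C ** (F + \<tau> *\<^sub>R G) ** transpose C"
    by (simp add: C2_def Y matrix_transpose_mul matrix_mul_assoc)
  moreover have "\<bar>(C ** (F + \<tau> *\<^sub>R G) ** transpose C)$i$i' - D2$i$i'\<bar> \<le> \<zeta>" for i i'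
    using block_perturbation_conj_near_shifted_diag[OF D C X XD cross e lam[unfolded d_def] less_imp_le[OF \<tau>]]
      \<zeta> unfolding D2_def G_def d_def by (meson order_trans)
  ultimately have XD2: "\<forall>i i'. \<bar>(C2 ** H ** transpose C2)$i$i' - D2$i$i'\<bar> \<le> \<zeta>" by simp
  have "\<tau> * (d + 1) \<le> 2 * \<tau> * d" using \<tau> d by simp
  then have gap2: "\<forall>i i'. i \<noteq> i' \<longrightarrow> \<tau> \<le> \<bar>D2$i$i - D2$i'$i'\<bar>"
    using diag_shift_separated[OF lam lam_sep \<tau>] D_gap unfolding D2_def by force
  have small2: "2 * real CARD('n)^2 * \<zeta> \<le> \<tau>" using small(1) unfolding d_def .
  obtain \<pi> where \<pi>: "\<forall>i j. i \<noteq> \<pi> j \<longrightarrow> \<bar>C2$i$j\<bar> \<le> 2 * real CARD('n) * \<zeta> / \<tau>"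
    by (rule simple_spectrum_eigenvectors_localized[OF C2 H D2 refl XD2 gap2 \<tau> small2])
  have "0 \<le> \<eta>" using XD abs_ge_zero order_trans by blast
  moreover have "0 \<le> \<tau> * d^4 * e" using \<tau> e d by simp
  ultimately have "0 \<le> \<zeta>" using \<zeta> by linarith
  then have "0 \<le> 2 * d * \<zeta> / \<tau>" using \<tau> d by simp
  then obtain \<sigma> s where \<sigma>: "bij \<sigma>" and s: "\<forall>m. s m = 1 \<or> s m = -1"
    and near: "\<forall>i m. \<bar>(C2 ** signed_permutation_matrix \<sigma> s)$i$m - mat 1$i$m\<bar> \<le> 2 * d * \<zeta> / \<tau>"
    using orthogonal_matrix_near_signed_permutation[OF C2 \<pi>] small(2) unfolding d_def by blast
  define S where "S = signed_permutation_matrix \<sigma> s"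
  have S: "orthogonal_matrix S"
    unfolding S_def using \<sigma> s by (simp add: bij_is_inj orthogonal_signed_permutation_matrix)
  define F' where "F' = transpose (R ** S) ** F ** (R ** S)"
  have "diagonal_mat F'"
    using diagonal_mat_signed_permutation_conj[OF bij_is_inj[OF \<sigma>] RFR]
    by (simp add: F'_def S_def matrix_transpose_mul matrix_mul_assoc)
  moreover have "(C2 ** S) ** F' ** transpose (C2 ** S)
      = C ** ((R ** S) ** F' ** transpose (R ** S)) ** transpose C"
    by (simp add: C2_def matrix_transpose_mul matrix_mul_assoc)
  then have "X = (C2 ** S) ** F' ** transpose (C2 ** S)"
    unfolding F'_def orthogonal_conj_transpose_conj(2)[OF orthogonal_matrix_mul[OF R S]] X ..
  ultimately show thesis
    using that[of "C2 ** S" F'] orthogonal_matrix_mul[OF C2 S] near by (simp add: S_def)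
qed

subsection \<open>Spectral decompositions near a diagonal matrix\<close>

lemma near_diagonal_spectral_decomposition_bounds:
  fixes D X :: "real^'n^'n" and g \<eta> :: real
  defines "d \<equiv> real CARD('n)"
  defines "\<tau> \<equiv> g / (4 * d)"
  defines "\<kappa> \<equiv> 2 * d * (1 + \<tau> * d^4 * (2 * d / g)) / \<tau>"
  assumes D: "diagonal_mat D" and gap: "\<forall>i j. D$i$i \<noteq> D$j$j \<longrightarrow> g \<le> \<bar>D$i$i - D$j$j\<bar>"
    and g: "g > 0" and X: "symmetric_matrix X" and XD: "\<forall>i j. \<bar>X$i$j - D$i$j\<bar> \<le> \<eta>"
    and le: "num_distinct_eigs X \<le> num_distinct_eigs D"
    and small: "4 * d^2 * \<eta> \<le> g" "2 * d^2 * (1 + \<tau> * d^4 * (2 * d / g)) * \<eta> \<le> \<tau>"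
      "2 * d * (\<kappa> * \<eta>) \<le> 1"
  shows "num_distinct_eigs X = num_distinct_eigs D"
    and "\<exists>C F. orthogonal_matrix C \<and> diagonal_mat F \<and> X = C ** F ** transpose C \<and>
           (\<forall>i. \<bar>D$i$i - F$i$i\<bar> \<le> 2 * d * \<eta>) \<and> (\<forall>i j. \<bar>C$i$j - mat 1$i$j\<bar> \<le> \<kappa> * \<eta>)"
proof -
  have d: "d \<ge> 1" unfolding d_def by (simp add: Suc_le_eq)
  have \<tau>: "\<tau> > 0" and \<tau>d: "2 * \<tau> * d = g / 2" using g d by (auto simp: \<tau>_def)
  have \<eta>: "\<eta> \<ge> 0" using XD abs_ge_zero order_trans by blast
  obtain C F where C: "orthogonal_matrix C" and F: "diagonal_mat F" and XC: "X = C ** F ** transpose C"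
    using symmetric_matrix_spectral_decomposition[OF X] .
  have "D = mat 1 ** D ** transpose (mat 1)" by simp
  then have num_D: "num_distinct_eigs D = card (range (\<lambda>i. D$i$i))"
    by (rule num_distinct_eigs_spectral_decomposition[OF orthogonal_matrix_id D])
  note num_X = num_distinct_eigs_spectral_decomposition[OF C F XC]
  note clusters = eigenvalue_clusters_near_diagonal[OF D C F XC XD gap g small(1)[unfolded d_def]
      le[unfolded num_X num_D]]
  show "num_distinct_eigs X = num_distinct_eigs D" using clusters(1) num_X num_D by simp
  define \<zeta> where "\<zeta> = (1 + \<tau> * d^4 * (2 * d / g)) * \<eta>"
  have \<kappa>\<eta>: "2 * d * \<zeta> / \<tau> = \<kappa> * \<eta>" by (simp add: \<zeta>_def \<kappa>_def)
  have "0 \<le> \<kappa>" unfolding \<kappa>_def using \<tau> g d by simp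
  then have "1 * (\<kappa> * \<eta>) \<le> d * (\<kappa> * \<eta>)" using d \<eta> by (intro mult_right_mono) auto
  then have half: "\<kappa> * \<eta> \<le> 1/2" using small(3) by linarith
  have D_gap: "\<forall>i i'. D$i$i \<noteq> D$i'$i' \<longrightarrow> 2 * \<tau> * d \<le> \<bar>D$i$i - D$i'$i'\<bar>"
  proof (intro allI impI)
    fix i i' assume "D$i$i \<noteq> D$i'$i'"
    then have "g \<le> \<bar>D$i$i - D$i'$i'\<bar>" using gap by blast
    then show "2 * \<tau> * d \<le> \<bar>D$i$i - D$i'$i'\<bar>" using g \<tau>d by linarith
  qed
  have F_gap: "\<forall>j j'. F$j$j \<noteq> F$j'$j' \<longrightarrow> 2 * \<tau> * d \<le> \<bar>F$j$j - F$j'$j'\<bar>"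
    unfolding \<tau>d by (rule clusters(2))
  have "0 \<le> 2 * d * \<eta> / g" using \<eta> g d by simp
  moreover have "\<eta> + \<tau> * d^4 * (2 * d * \<eta> / g) \<le> \<zeta>" by (simp add: \<zeta>_def algebra_simps)
  moreover have "2 * d^2 * \<zeta> \<le> \<tau>" using small(2) by (simp add: \<zeta>_def mult.assoc)
  moreover have "2 * d * (2 * d * \<zeta> / \<tau>) \<le> 1" using small(3) unfolding \<kappa>\<eta> .
  ultimately obtain C' F' where C': "orthogonal_matrix C'" and F': "diagonal_mat F'"
    and XC': "X = C' ** F' ** transpose C'" and near: "\<forall>i m. \<bar>C'$i$m - mat 1$i$m\<bar> \<le> \<kappa> * \<eta>"
    using eigenbasis_near_identity[OF D C F XC XD D_gap[unfolded d_def] F_gap[unfolded d_def]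
        clusters(3) _ \<tau>] \<kappa>\<eta> unfolding d_def by metis
  have "\<bar>D$i$i - F'$i$i\<bar> \<le> 2 * d * \<eta>" for i
  proof -
    have "1/2 \<le> C'$i$i" using near[rule_format, of i i] half by (simp add: mat_def)
    then have "\<bar>D$i$i - F'$i$i\<bar> * (1/2) \<le> \<bar>D$i$i - F'$i$i\<bar> * \<bar>C'$i$i\<bar>"
      by (intro mult_left_mono) auto
    also have "\<dots> \<le> d * \<eta>"
      unfolding d_def by (rule spectral_decomposition_perturbation[OF C' F' D XC' XD])
    finally show ?thesis by simp
  qed
  then show "\<exists>C F. orthogonal_matrix C \<and> diagonal_mat F \<and> X = C ** F ** transpose C \<and>
      (\<forall>i. \<bar>D$i$i - F$i$i\<bar> \<le> 2 * d * \<eta>) \<and> (\<forall>i j. \<bar>C$i$j - mat 1$i$j\<bar> \<le> \<kappa> * \<eta>)"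
    using C' F' XC' near by blast
qed

lemma near_diagonal_spectral_decomposition:
  fixes D :: "real^'n^'n"
  assumes D: "diagonal_mat D" and \<epsilon>: "\<epsilon> > 0"
  obtains \<eta> where "\<eta> > 0"
    "\<And>X. symmetric_matrix X \<Longrightarrow> \<forall>i j. \<bar>X$i$j - D$i$j\<bar> \<le> \<eta> \<Longrightarrow>
       num_distinct_eigs X \<le> num_distinct_eigs D \<Longrightarrow>
       num_distinct_eigs X = num_distinct_eigs D \<and>
       (\<exists>C F. orthogonal_matrix C \<and> diagonal_mat F \<and> X = C ** F ** transpose C \<and>
          (\<forall>i. \<bar>D$i$i - F$i$i\<bar> < \<epsilon>) \<and> (\<forall>i j. \<bar>C$i$j - mat 1$i$j\<bar> < \<epsilon>))"
proof -
  define d where "d = real CARD('n)"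
  have "finite (range (\<lambda>i. D$i$i))" by simp
  then obtain g where g: "g > 0"
    and "\<forall>x\<in>range (\<lambda>i. D$i$i). \<forall>y\<in>range (\<lambda>i. D$i$i). x \<noteq> y \<longrightarrow> g \<le> \<bar>x - y\<bar>"
    by (rule finite_set_separated)
  then have gap: "\<forall>i j. D$i$i \<noteq> D$j$j \<longrightarrow> g \<le> \<bar>D$i$i - D$j$j\<bar>" by blast
  define \<tau> where "\<tau> = g / (4 * d)"
  define c where "c = 1 + \<tau> * d^4 * (2 * d / g)"
  define \<kappa> where "\<kappa> = 2 * d * c / \<tau>"
  have small: "\<forall>\<^sub>F \<eta> in at_right 0. k * \<eta> < b" if "b > 0" for k b :: real
  proof -
    have "((\<lambda>\<eta>. k * \<eta>) \<longlongrightarrow> k * 0) (at_right (0::real))" by (intro tendsto_intros)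
    then show ?thesis using that by (simp add: order_tendstoD(2))
  qed
  have "\<forall>\<^sub>F \<eta> in at_right 0. 0 < \<eta> \<and> 4 * d^2 * \<eta> < g \<and> 2 * d^2 * c * \<eta> < \<tau> \<and>
      2 * d * \<kappa> * \<eta> < 1 \<and> \<kappa> * \<eta> < \<epsilon> \<and> 2 * d * \<eta> < \<epsilon>"
    using g \<epsilon> by (simp add: d_def \<tau>_def eventually_conj_iff eventually_at_right_less small)
  then obtain \<eta> where \<eta>: "0 < \<eta>" "4 * d^2 * \<eta> < g" "2 * d^2 * c * \<eta> < \<tau>"
    "2 * d * \<kappa> * \<eta> < 1" "\<kappa> * \<eta> < \<epsilon>" "2 * d * \<eta> < \<epsilon>"
    using eventually_happens[of _ "at_right (0::real)"] by auto
  show thesis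
  proof (rule that[OF \<eta>(1)])
    fix X :: "real^'n^'n"
    assume X: "symmetric_matrix X" and XD: "\<forall>i j. \<bar>X$i$j - D$i$j\<bar> \<le> \<eta>"
      and le: "num_distinct_eigs X \<le> num_distinct_eigs D"
    have "4 * d^2 * \<eta> \<le> g" "2 * d^2 * c * \<eta> \<le> \<tau>" "2 * d * (\<kappa> * \<eta>) \<le> 1"
      using \<eta> by (simp_all add: mult.assoc)
    note bounds = near_diagonal_spectral_decomposition_bounds[OF D gap g X XD le,
        folded d_def, folded \<tau>_def, folded c_def, folded \<kappa>_def, OF this]
    obtain C F where CF: "orthogonal_matrix C" "diagonal_mat F" "X = C ** F ** transpose C"
      and F_near: "\<forall>i. \<bar>D$i$i - F$i$i\<bar> \<le> 2 * d * \<eta>"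
      and C_near: "\<forall>i j. \<bar>C$i$j - mat 1$i$j\<bar> \<le> \<kappa> * \<eta>"
      using bounds(2) by blast
    have "\<forall>i. \<bar>D$i$i - F$i$i\<bar> < \<epsilon>" using F_near \<eta>(6) by (meson le_less_trans)
    moreover have "\<forall>i j. \<bar>C$i$j - mat 1$i$j\<bar> < \<epsilon>" using C_near \<eta>(5) by (meson le_less_trans)
    ultimately show "num_distinct_eigs X = num_distinct_eigs D \<and>
       (\<exists>C F. orthogonal_matrix C \<and> diagonal_mat F \<and> X = C ** F ** transpose C \<and>
          (\<forall>i. \<bar>D$i$i - F$i$i\<bar> < \<epsilon>) \<and> (\<forall>i j. \<bar>C$i$j - mat 1$i$j\<bar> < \<epsilon>))"
      using bounds(1) CF by blast
  qed
qed

lemma spectral_decomposition_stability: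
  fixes P D :: "real^'n^'n"
  assumes P: "orthogonal_matrix P" and D: "diagonal_mat D" and "\<epsilon> > 0"
  obtains \<delta> where "\<delta> > 0"
    "\<And>B. symmetric_matrix B \<Longrightarrow> \<forall>i j. \<bar>(P ** D ** transpose P)$i$j - B$i$j\<bar> < \<delta> \<Longrightarrow>
       num_distinct_eigs B \<le> num_distinct_eigs D \<Longrightarrow>
       num_distinct_eigs B = num_distinct_eigs D \<and>
       (\<exists>Q F. orthogonal_matrix Q \<and> diagonal_mat F \<and> B = Q ** F ** transpose Q \<and>
          (\<forall>i. \<bar>D$i$i - F$i$i\<bar> < \<epsilon>) \<and> (\<forall>i j. \<bar>Q$i$j - P$i$j\<bar> < \<epsilon>))"
proof -
  define d where "d = real CARD('n)"
  have "d \<ge> 1" by (simp add: d_def Suc_le_eq)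
  then have "d > 0" by simp
  obtain \<eta> where "\<eta> > 0" and near: "\<And>X. symmetric_matrix X \<Longrightarrow> \<forall>i j. \<bar>X$i$j - D$i$j\<bar> \<le> \<eta> \<Longrightarrow>
       num_distinct_eigs X \<le> num_distinct_eigs D \<Longrightarrow>
       num_distinct_eigs X = num_distinct_eigs D \<and>
       (\<exists>C F. orthogonal_matrix C \<and> diagonal_mat F \<and> X = C ** F ** transpose C \<and>
          (\<forall>i. \<bar>D$i$i - F$i$i\<bar> < \<epsilon> / d) \<and> (\<forall>i j. \<bar>C$i$j - mat 1$i$j\<bar> < \<epsilon> / d))"
    using near_diagonal_spectral_decomposition[OF D] \<open>\<epsilon> > 0\<close> \<open>d > 0\<close> by (metis divide_pos_pos)
  show thesis
  proof (rule that)
    show "\<eta> / d^2 > 0" using \<open>\<eta> > 0\<close> \<open>d > 0\<close> by simp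
    fix B :: "real^'n^'n"
    assume sym_B: "symmetric_matrix B" and AB: "\<forall>i j. \<bar>(P ** D ** transpose P)$i$j - B$i$j\<bar> < \<eta> / d^2"
      and le: "num_distinct_eigs B \<le> num_distinct_eigs D"
    define X where "X = transpose P ** B ** P"
    have BX: "B = P ** X ** transpose P" unfolding X_def orthogonal_conj_transpose_conj(2)[OF P] ..
    have sym_X: "symmetric_matrix X"
      using sym_B by (simp add: X_def symmetric_matrix_def matrix_transpose_mul matrix_mul_assoc)
    have "\<bar>X$i$j - D$i$j\<bar> \<le> \<eta>" for i j
    proof -
      have "\<forall>k l. \<bar>B$k$l - (P ** D ** transpose P)$k$l\<bar> \<le> \<eta> / d^2"
        using AB by (metis abs_minus_commute less_imp_le)
      from orthogonal_conj_entrywise_diff[OF _ this, of "transpose P" i j] P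
      show ?thesis using \<open>d > 0\<close> by (simp add: X_def orthogonal_conj_transpose_conj(1)[OF P] d_def)
    qed
    moreover have num_X: "num_distinct_eigs X = num_distinct_eigs B"
      using num_distinct_eigs_orthogonal_conj[OF P sym_X] BX by simp
    ultimately obtain C F where "num_distinct_eigs X = num_distinct_eigs D"
      and C: "orthogonal_matrix C" and F: "diagonal_mat F" "X = C ** F ** transpose C"
      and F_near: "\<forall>i. \<bar>D$i$i - F$i$i\<bar> < \<epsilon> / d" and C_near: "\<forall>i j. \<bar>C$i$j - mat 1$i$j\<bar> < \<epsilon> / d"
      using near[OF sym_X] le by auto
    then have "num_distinct_eigs B = num_distinct_eigs D" using num_X by simp
    moreover have "\<epsilon> / d \<le> \<epsilon>" using \<open>d \<ge> 1\<close> \<open>\<epsilon> > 0\<close> by (simp add: divide_le_eq)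
    then have "\<forall>i. \<bar>D$i$i - F$i$i\<bar> < \<epsilon>" using F_near by (meson less_le_trans)
    moreover have "\<bar>(P ** C)$i$j - P$i$j\<bar> < \<epsilon>" for i j
    proof -
      have "\<bar>(P ** C)$i$j - P$i$j\<bar> < real CARD('n) * (\<epsilon> / d)"
        using C_near by (intro orthogonal_matrix_mult_near_identity[OF P]) blast
      then show ?thesis using \<open>d > 0\<close> by (simp add: d_def)
    qed
    moreover have "B = (P ** C) ** F ** transpose (P ** C)"
      using BX F(2) by (simp add: matrix_transpose_mul matrix_mul_assoc)
    ultimately show "num_distinct_eigs B = num_distinct_eigs D \<and>
       (\<exists>Q F. orthogonal_matrix Q \<and> diagonal_mat F \<and> B = Q ** F ** transpose Q \<and>
          (\<forall>i. \<bar>D$i$i - F$i$i\<bar> < \<epsilon>) \<and> (\<forall>i j. \<bar>Q$i$j - P$i$j\<bar> < \<epsilon>))"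
      using orthogonal_matrix_mul[OF P C] F(1) by blast
  qed
qed

theorem lemma3p3:
  fixes r :: nat and ls :: "nat \<Rightarrow> nat" and l :: nat
    and A P D :: "real^'n^'n"
  assumes "CARD('n) \<ge> 2"
    and "r \<ge> 1"
    and "\<forall>j\<in>{1..r}. ls j \<in> {1..CARD('n)}"
    and "(\<Sum>j=1..r. ls j) \<le> CARD('n)"
    and "int l = int CARD('n) - (\<Sum>j=1..r. (int (ls j) - 1))"
    and "A \<in> S_set r ls"
    and "orthogonal_matrix P" and "diagonal_mat D"
    and "A = P ** D ** transpose P"
    and "num_distinct_eigs A = l"
  shows "\<forall>\<epsilon>>0. \<exists>\<delta>>0. \<forall>B \<in> S_set r ls.
           (\<forall>i j. \<bar>A $ i $ j - B $ i $ j\<bar> < \<delta>) \<longrightarrow>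
           num_distinct_eigs B = l \<and>
           (\<exists>Q F. orthogonal_matrix Q \<and> diagonal_mat F \<and> B = Q ** F ** transpose Q \<and>
              (\<forall>i. \<bar>D $ i $ i - F $ i $ i\<bar> < \<epsilon>) \<and>
              (\<forall>i j. \<bar>Q $ i $ j - P $ i $ j\<bar> < \<epsilon>))"
proof (intro allI impI)
  note l = assms(5) and P = assms(7) and D = assms(8) and A = assms(9)
  fix \<epsilon> :: real assume "\<epsilon> > 0"
  then obtain \<delta> where "\<delta> > 0" and stable: "\<And>B. symmetric_matrix B \<Longrightarrow>
       \<forall>i j. \<bar>A$i$j - B$i$j\<bar> < \<delta> \<Longrightarrow> num_distinct_eigs B \<le> num_distinct_eigs D \<Longrightarrow>
       num_distinct_eigs B = num_distinct_eigs D \<and>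
       (\<exists>Q F. orthogonal_matrix Q \<and> diagonal_mat F \<and> B = Q ** F ** transpose Q \<and>
          (\<forall>i. \<bar>D$i$i - F$i$i\<bar> < \<epsilon>) \<and> (\<forall>i j. \<bar>Q$i$j - P$i$j\<bar> < \<epsilon>))"
    using spectral_decomposition_stability[OF P D] unfolding A by metis
  have num_D: "num_distinct_eigs D = l"
    using assms(10) num_distinct_eigs_orthogonal_conj[OF P diagonal_mat_symmetric[OF D]] A by simp
  have "symmetric_matrix B" and "num_distinct_eigs B \<le> num_distinct_eigs D"
    if "B \<in> S_set r ls" for B :: "real^'n^'n"
    using that num_distinct_eigs_le_if_S_set[OF that l] num_D by (auto simp: S_set_def)
  then show "\<exists>\<delta>>0. \<forall>B \<in> S_set r ls. (\<forall>i j. \<bar>A $ i $ j - B $ i $ j\<bar> < \<delta>) \<longrightarrow>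
           num_distinct_eigs B = l \<and>
           (\<exists>Q F. orthogonal_matrix Q \<and> diagonal_mat F \<and> B = Q ** F ** transpose Q \<and>
              (\<forall>i. \<bar>D $ i $ i - F $ i $ i\<bar> < \<epsilon>) \<and> (\<forall>i j. \<bar>Q $ i $ j - P $ i $ j\<bar> < \<epsilon>))"
    using \<open>\<delta> > 0\<close> stable num_D by metis
qed

end
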